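(* Let $q>0$ be real and let $\mathfrak{M}^{\rm I}_q\subset\widetilde{SL}(2)_q$ and the involution $\dagger$ be as in the context. Let $U$ be a finite-dimensional Hermitian vector space with inner product $(\cdot,\cdot)$, conjugate linear in the first argument, and define the pairing $(\cdot,\cdot):(U\otimes\mathfrak{M}^{\rm I}_q)\times(U\otimes\mathfrak{M}^{\rm I}_q)\to\mathfrak{M}^{\rm I}_q$ by $(v_1\otimes f_1,v_2\otimes f_2)=(v_1,v_2)\,f_1^\dagger f_2$, extended additively. Then for $\sigma\in U\otimes\mathfrak{M}^{\rm I}_q$ we have $(\sigma,\sigma)=0$ if and only if $\sigma=0$.
   Context: $SL(2)_q$ is the unital associative $\mathbb{C}$-algebra generated by $g_{11'},g_{12'},g_{21'},g_{22'}$ with relations $g_{11'}g_{12'}=q^{-1}g_{12'}g_{11'}$, $g_{11'}g_{21'}=q^{-1}g_{21'}g_{11'}$, $g_{12'}g_{22'}=q^{-1}g_{22'}g_{12'}$, $g_{21'}g_{22'}=q^{-1}g_{22'}g_{21'}$, $g_{12'}g_{21'}=g_{21'}g_{12'}$, and $g_{11'}g_{22'}-q^{-1}g_{12'}g_{21'}=g_{22'}g_{11'}-qg_{21'}g_{12'}=1$. The algebra $\widetilde{SL}(2)_q$ is obtained by adjoining an invertible generator $\delta$ with $\delta g_{11'}=g_{11'}\delta$, $\delta g_{12'}=qg_{12'}\delta$, $\delta g_{21'}=q^{-1}g_{21'}\delta$, $\delta g_{22'}=g_{22'}\delta$. The involution $\dagger$ is the conjugate-linear anti-automorphism of $\widetilde{SL}(2)_q$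 with $g_{11'}^\dagger=g_{22'}$, $g_{12'}^\dagger=-g_{21'}$, $g_{21'}^\dagger=-g_{12'}$, $g_{22'}^\dagger=g_{11'}$, $\delta^\dagger=\delta$. Set $x_{11'}=\delta g_{11'}$, $x_{12'}=q^{-1/2}\delta g_{12'}$, $x_{21'}=q^{1/2}\delta g_{21'}$, $x_{22'}=\delta g_{22'}$, and let $\mathfrak{M}^{\rm I}_q$ be the subalgebra generated by these four elements (the quantum affine Minkowski space). It satisfies $x_{11'}x_{12'}=x_{12'}x_{11'}$, $x_{21'}x_{22'}=x_{22'}x_{21'}$, $[x_{11'},x_{22'}]+[x_{21'},x_{12'}]=0$, $x_{11'}x_{21'}=q^{-2}x_{21'}x_{11'}$, $x_{12'}x_{22'}=q^{-2}x_{22'}x_{12'}$, $x_{21'}x_{12'}=q^2x_{12'}x_{21'}$, and is preserved by $\dagger$: $x_{11'}^\dagger=x_{22'}$, $x_{12'}^\dagger=-x_{21'}$, $x_{21'}^\dagger=-x_{12'}$, $x_{22'}^\dagger=x_{11'}$. *)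

theory Defs
  imports "HOL-Analysis.Analysis" "HOL-Library.Poly_Mapping"
begin

datatype gen = G11 | G12 | G21 | G22 | Dl | DlInv

text \<open>Words in the generators; concatenation makes them a monoid, so that
  finitely supported complex-valued functions on words (convolution product)
  form the free unital associative C-algebra on the generators.\<close>
datatype word = Word "gen list"

instantiation word :: monoid_add
begin
definition zero_word :: word where "zero_word = Word []"
fun plus_word :: "word \<Rightarrow> word \<Rightarrow> word" where
  "plus_word (Word a) (Word b) = Word (a @ b)"
instance
proof
  fix a b c :: word
  show "a + b + c = a + (b + c)" by (cases a; cases b; cases c) simp
  show "0 + a = a" by (cases a) (simp add: zero_word_def)
  show "a + 0 = a" by (cases a) (simp add: zero_word_def)
qed
end

type_synonym falg = "word \<Rightarrow>\<^sub>0 complex"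

definition gen_el :: "gen \<Rightarrow> falg" where
  "gen_el g = Poly_Mapping.single (Word [g]) 1"

definition scalar :: "complex \<Rightarrow> falg" where
  "scalar c = Poly_Mapping.single 0 c"

definition sl_rels :: "real \<Rightarrow> falg set" where
  "sl_rels q = (let qq = complex_of_real q; qi = complex_of_real (1 / q);
       g11 = gen_el G11; g12 = gen_el G12; g21 = gen_el G21; g22 = gen_el G22;
       d = gen_el Dl; di = gen_el DlInv in
     { g11 * g12 - scalar qi * g12 * g11,
       g11 * g21 - scalar qi * g21 * g11,
       g12 * g22 - scalar qi * g22 * g12,
       g21 * g22 - scalar qi * g22 * g21,
       g12 * g21 - g21 * g12,
       g11 * g22 - scalar qi * g12 * g21 - 1,
       g22 * g11 - scalar qq * g21 * g12 - 1,
       d * di - 1,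
       di * d - 1,
       d * g11 - g11 * d,
       d * g12 - scalar qq * g12 * d,
       d * g21 - scalar qi * g21 * d,
       d * g22 - g22 * d })"

text \<open>Two-sided ideal generated by the relations; an element of the free algebra
  represents zero in SL(2)_q-tilde iff it lies in this ideal.\<close>
inductive_set sl_ideal :: "real \<Rightarrow> falg set" for q :: real where
  rel: "r \<in> sl_rels q \<Longrightarrow> r \<in> sl_ideal q"
| zero: "0 \<in> sl_ideal q"
| add: "a \<in> sl_ideal q \<Longrightarrow> b \<in> sl_ideal q \<Longrightarrow> a + b \<in> sl_ideal q"
| mult: "a \<in> sl_ideal q \<Longrightarrow> x * a * y \<in> sl_ideal q"

fun dag_gen :: "gen \<Rightarrow> falg" where
  "dag_gen G11 = gen_el G22"
| "dag_gen G12 = - gen_el G21"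
| "dag_gen G21 = - gen_el G12"
| "dag_gen G22 = gen_el G11"
| "dag_gen Dl = gen_el Dl"
| "dag_gen DlInv = gen_el DlInv"

fun dag_list :: "gen list \<Rightarrow> falg" where
  "dag_list [] = 1"
| "dag_list (g # ws) = dag_list ws * dag_gen g"

fun dag_word :: "word \<Rightarrow> falg" where
  "dag_word (Word ws) = dag_list ws"

definition dagger :: "falg \<Rightarrow> falg" where
  "dagger f = (\<Sum>w\<in>Poly_Mapping.keys f. scalar (cnj (Poly_Mapping.lookup f w)) * dag_word w)"

definition x11 :: "real \<Rightarrow> falg" where "x11 q = gen_el Dl * gen_el G11"
definition x12 :: "real \<Rightarrow> falg" where
  "x12 q = scalar (complex_of_real (1 / sqrt q)) * gen_el Dl * gen_el G12"
definition x21 :: "real \<Rightarrow> falg" where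
  "x21 q = scalar (complex_of_real (sqrt q)) * gen_el Dl * gen_el G21"
definition x22 :: "real \<Rightarrow> falg" where "x22 q = gen_el Dl * gen_el G22"

text \<open>Representatives (in the free algebra) of elements of the unital subalgebra
  generated by the x's.\<close>
inductive_set minkowski :: "real \<Rightarrow> falg set" for q :: real where
  scal: "scalar c \<in> minkowski q"
| gx11: "x11 q \<in> minkowski q"
| gx12: "x12 q \<in> minkowski q"
| gx21: "x21 q \<in> minkowski q"
| gx22: "x22 q \<in> minkowski q"
| add: "a \<in> minkowski q \<Longrightarrow> b \<in> minkowski q \<Longrightarrow> a + b \<in> minkowski q"
| mult: "a \<in> minkowski q \<Longrightarrow> b \<in> minkowski q \<Longrightarrow> a * b \<in> minkowski q"

text \<open>U = C^n with the standard Hermitian inner product (conjugate linear in the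
  first argument); vectors are functions nat => complex, coordinates i < n.\<close>
definition herm :: "nat \<Rightarrow> (nat \<Rightarrow> complex) \<Rightarrow> (nat \<Rightarrow> complex) \<Rightarrow> complex" where
  "herm n v w = (\<Sum>i<n. cnj (v i) * w i)"

text \<open>sigma = sum_{k<m} v k (x) f k.  Pairing (sigma, sigma) extended additively.\<close>
definition tpair :: "nat \<Rightarrow> nat \<Rightarrow> (nat \<Rightarrow> nat \<Rightarrow> complex) \<Rightarrow> (nat \<Rightarrow> falg) \<Rightarrow> falg" where
  "tpair n m v f = (\<Sum>k<m. \<Sum>l<m. scalar (herm n (v k) (v l)) * (dagger (f k) * f l))"

text \<open>Component i of sigma in U (x) M = M^n (standard basis).\<close>
definition tcomp :: "nat \<Rightarrow> (nat \<Rightarrow> nat \<Rightarrow> complex) \<Rightarrow> (nat \<Rightarrow> falg) \<Rightarrow> nat \<Rightarrow> falg" where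
  "tcomp m v f i = (\<Sum>k<m. scalar (v k i) * f k)"

end

theory Submission
  imports Defs "HOL-Computational_Algebra.Polynomial"
begin

text \<open>Writing \<open>\<sigma> = \<Sum>\<^sub>i e\<^sub>i \<otimes> \<sigma>\<^sub>i\<close> in an orthonormal basis, \<open>(\<sigma>, \<sigma>) = \<Sum>\<^sub>i \<sigma>\<^sub>i\<^sup>\<dagger> \<sigma>\<^sub>i\<close>, so only
  \<open>(\<sigma>, \<sigma>) = 0 \<Longrightarrow> \<sigma>\<^sub>i = 0\<close> needs work. In every \<open>*\<close>-representation the diagonal entries of
  \<open>\<Sum>\<^sub>i \<sigma>\<^sub>i\<^sup>\<dagger> \<sigma>\<^sub>i\<close> are sums of squared moduli of entries of the \<open>\<sigma>\<^sub>i\<close>, hence every \<open>\<sigma>\<^sub>i\<close> is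
  annihilated by all \<open>*\<close>-representations. Modulo the relations, the quantum Minkowski space is
  spanned by the ordered monomials \<open>x\<^sub>1\<^sub>1\<^sup>a x\<^sub>1\<^sub>2\<^sup>b x\<^sub>2\<^sub>1\<^sup>c x\<^sub>2\<^sub>2\<^sup>d\<close> (in the reverse order when
  \<open>q > 1\<close>), and these are linearly independent as operators in a suitable family of
  \<open>*\<close>-representations by weighted shifts on \<open>\<int>\<^sup>2\<close>: for \<open>q \<noteq> 1\<close> the standard representation of
  \<open>SU\<^sub>q(2)\<close> on a half plane, with \<open>\<delta>\<close> acting diagonally with a free scale, and for \<open>q = 1\<close>
  constant weights with two free scales. Hence \<open>\<sigma>\<^sub>i = 0\<close>.\<close>

lemma zero_word_Word: "(0::word) = Word []"
  by (simp add: zero_word_def)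

lemma one_falg_single: "(1::falg) = Poly_Mapping.single (Word []) 1"
  by (simp add: zero_word_Word[symmetric])

lemma scalar_0 [simp]: "scalar 0 = 0" by (simp add: scalar_def)
lemma scalar_1 [simp]: "scalar 1 = 1" by (simp add: scalar_def)
lemma scalar_add: "scalar (a + b) = scalar a + scalar b" by (simp add: scalar_def single_add)
lemma scalar_uminus: "scalar (- a) = - scalar a" by (simp add: scalar_def single_uminus)
lemma scalar_mult_scalar: "scalar a * scalar b = scalar (a * b)" by (simp add: scalar_def mult_single)

lemma scalar_sum: "scalar (\<Sum>i\<in>A. f i) = (\<Sum>i\<in>A. scalar (f i))"
  by (induction A rule: infinite_finite_induct) (auto simp: scalar_add)

lemma falg_single_induct [case_names zero add]:
  assumes "P 0" and "\<And>f w c. P f \<Longrightarrow> P (f + Poly_Mapping.single w c)"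
  shows "P (f::falg)"
proof (induction f rule: update_induct)
  case (update f a b)
  then have "Poly_Mapping.update a b f = f + Poly_Mapping.single a b"
    by (intro poly_mapping_eqI) (auto simp: lookup_update lookup_add lookup_single when_def in_keys_iff)
  with update assms(2) show ?case by simp
qed (fact assms(1))

lemma scalar_mult_commute: "scalar c * f = f * scalar c"
proof (induction f rule: falg_single_induct)
  case (add f w d)
  have "scalar c * Poly_Mapping.single w d = Poly_Mapping.single w d * scalar c"
    by (simp add: scalar_def mult_single mult.commute)
  with add show ?case by (simp add: distrib_left distrib_right)
qed simp

lemma mult_scalar_left_commute: "f * (scalar c * g) = scalar c * (f * g)"
  by (metis mult.assoc scalar_mult_commute)

lemma scalar_mult_scalar_assoc: "scalar c * (scalar d * g) = scalar (c * d) * g"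
  by (metis mult.assoc scalar_mult_scalar)

lemma gen_mult_scalar: "gen_el a * (scalar c * g) = scalar c * (gen_el a * g)"
  by (rule mult_scalar_left_commute)

lemmas scalar_normalize = mult.assoc gen_mult_scalar scalar_mult_scalar_assoc

definition keys_sum :: "('k \<Rightarrow> 'v::zero \<Rightarrow> 'r::comm_monoid_add) \<Rightarrow> ('k \<Rightarrow>\<^sub>0 'v) \<Rightarrow> 'r" where
  "keys_sum h f = (\<Sum>k\<in>Poly_Mapping.keys f. h k (Poly_Mapping.lookup f k))"

lemma keys_sum_superset:
  assumes "finite A" "Poly_Mapping.keys f \<subseteq> A" "\<And>k. h k 0 = 0"
  shows "keys_sum h f = (\<Sum>k\<in>A. h k (Poly_Mapping.lookup f k))"
  unfolding keys_sum_def by (rule sum.mono_neutral_left) (use assms in \<open>auto simp: in_keys_iff\<close>)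

lemma keys_sum_zero [simp]: "keys_sum h 0 = 0"
  by (simp add: keys_sum_def)

lemma keys_sum_add:
  assumes "\<And>k. h k 0 = 0" "\<And>k a b. h k (a + b) = h k a + h k b"
  shows "keys_sum h (f + g) = keys_sum h f + keys_sum h g"
proof -
  let ?A = "Poly_Mapping.keys f \<union> Poly_Mapping.keys g"
  have "keys_sum h (f + g) = (\<Sum>k\<in>?A. h k (Poly_Mapping.lookup (f + g) k))"
    by (rule keys_sum_superset) (auto simp: assms keys_add)
  also have "\<dots> = (\<Sum>k\<in>?A. h k (Poly_Mapping.lookup f k)) + (\<Sum>k\<in>?A. h k (Poly_Mapping.lookup g k))"
    by (simp add: lookup_add assms sum.distrib)
  also have "\<dots> = keys_sum h f + keys_sum h g"
    by (subst (1 2) keys_sum_superset[where A = ?A]) (auto simp: assms)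
  finally show ?thesis .
qed

lemma keys_sum_single: "h k 0 = 0 \<Longrightarrow> keys_sum h (Poly_Mapping.single k c) = h k c"
  by (cases "c = 0") (auto simp: keys_sum_def)

lemma sl_ideal_mult_left: "a \<in> sl_ideal q \<Longrightarrow> x * a \<in> sl_ideal q"
  using sl_ideal.mult[of a q x 1] by simp

lemma sl_ideal_mult_right: "a \<in> sl_ideal q \<Longrightarrow> a * y \<in> sl_ideal q"
  using sl_ideal.mult[of a q 1 y] by simp

lemma sl_ideal_uminus: "a \<in> sl_ideal q \<Longrightarrow> - a \<in> sl_ideal q"
  using sl_ideal_mult_left[of a q "scalar (-1)"] by (simp add: scalar_uminus)

lemma sl_ideal_diff: "a \<in> sl_ideal q \<Longrightarrow> b \<in> sl_ideal q \<Longrightarrow> a - b \<in> sl_ideal q"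
  using sl_ideal.add[OF _ sl_ideal_uminus, of a q b] by simp

lemma sl_ideal_sum: "(\<And>i. i \<in> A \<Longrightarrow> f i \<in> sl_ideal q) \<Longrightarrow> (\<Sum>i\<in>A. f i) \<in> sl_ideal q"
  by (induction A rule: infinite_finite_induct) (auto intro: sl_ideal.zero sl_ideal.add)

definition sl_cong :: "real \<Rightarrow> falg \<Rightarrow> falg \<Rightarrow> bool" where
  "sl_cong q a b \<longleftrightarrow> a - b \<in> sl_ideal q"

lemma sl_cong_refl [simp]: "sl_cong q a a"
  by (simp add: sl_cong_def sl_ideal.zero)

lemma sl_cong_sym: "sl_cong q a b \<Longrightarrow> sl_cong q b a"
  unfolding sl_cong_def using sl_ideal_uminus[of "a - b" q] by simp

lemma sl_cong_trans [trans]: "sl_cong q a b \<Longrightarrow> sl_cong q b c \<Longrightarrow> sl_cong q a c"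
  unfolding sl_cong_def using sl_ideal.add[of "a - b" q "b - c"] by simp

lemma sl_cong_add: "sl_cong q a b \<Longrightarrow> sl_cong q c d \<Longrightarrow> sl_cong q (a + c) (b + d)"
  unfolding sl_cong_def using sl_ideal.add[of "a - b" q "c - d"] by (simp add: algebra_simps)

lemma sl_cong_diff: "sl_cong q a b \<Longrightarrow> sl_cong q c d \<Longrightarrow> sl_cong q (a - c) (b - d)"
  unfolding sl_cong_def using sl_ideal_diff[of "a - b" q "c - d"] by (simp add: algebra_simps)

lemma sl_cong_mult_left: "sl_cong q a b \<Longrightarrow> sl_cong q (x * a) (x * b)"
  unfolding sl_cong_def using sl_ideal_mult_left[of "a - b" q x] by (simp add: right_diff_distrib)

lemma sl_cong_mult_right: "sl_cong q a b \<Longrightarrow> sl_cong q (a * y) (b * y)"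
  unfolding sl_cong_def using sl_ideal_mult_right[of "a - b" q y] by (simp add: left_diff_distrib)

lemma sl_cong_zero_iff: "sl_cong q a 0 \<longleftrightarrow> a \<in> sl_ideal q"
  by (simp add: sl_cong_def)

lemma sl_cong_scalar_inverse:
  assumes "sl_cong q a (scalar k * b)" and "k' * k = 1"
  shows "sl_cong q b (scalar k' * a)"
proof -
  have "sl_cong q (scalar k' * a) (scalar k' * (scalar k * b))"
    using assms(1) by (rule sl_cong_mult_left)
  with assms(2) have "sl_cong q (scalar k' * a) b"
    by (simp add: scalar_mult_scalar_assoc)
  then show ?thesis by (rule sl_cong_sym)
qed

abbreviation "g11 \<equiv> gen_el G11"
abbreviation "g12 \<equiv> gen_el G12"
abbreviation "g21 \<equiv> gen_el G21"
abbreviation "g22 \<equiv> gen_el G22"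
abbreviation "dl \<equiv> gen_el Dl"
abbreviation "dl_inv \<equiv> gen_el DlInv"

lemma sl_rels_in_ideal:
  fixes q :: real
  defines "qi \<equiv> complex_of_real (1 / q)" and "qq \<equiv> complex_of_real q"
  shows "g11 * g12 - scalar qi * g12 * g11 \<in> sl_ideal q"
    "g11 * g21 - scalar qi * g21 * g11 \<in> sl_ideal q"
    "g12 * g22 - scalar qi * g22 * g12 \<in> sl_ideal q"
    "g21 * g22 - scalar qi * g22 * g21 \<in> sl_ideal q"
    "g12 * g21 - g21 * g12 \<in> sl_ideal q"
    "g11 * g22 - scalar qi * g12 * g21 - 1 \<in> sl_ideal q"
    "g22 * g11 - scalar qq * g21 * g12 - 1 \<in> sl_ideal q"
    "dl * dl_inv - 1 \<in> sl_ideal q"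
    "dl_inv * dl - 1 \<in> sl_ideal q"
    "dl * g11 - g11 * dl \<in> sl_ideal q"
    "dl * g12 - scalar qq * g12 * dl \<in> sl_ideal q"
    "dl * g21 - scalar qi * g21 * dl \<in> sl_ideal q"
    "dl * g22 - g22 * dl \<in> sl_ideal q"
  by (rule sl_ideal.rel, unfold sl_rels_def Let_def assms, (rule insertI1 | rule insertI2)+)+

definition delta_weight :: "real \<Rightarrow> gen \<Rightarrow> complex" where
  "delta_weight q a = (case a of G12 \<Rightarrow> complex_of_real (1 / q) | G21 \<Rightarrow> complex_of_real q | _ \<Rightarrow> 1)"

lemma delta_weight_nonzero: "q > 0 \<Longrightarrow> delta_weight q a \<noteq> 0"
  by (cases a) (simp_all add: delta_weight_def)

lemma gen_delta_commute:
  assumes "q > 0"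
  shows "sl_cong q (gen_el a * dl) (scalar (delta_weight q a) * (dl * gen_el a))"
proof (cases a)
  case G12
  have "sl_cong q (dl * g12) (scalar (complex_of_real q) * (g12 * dl))"
    using sl_rels_in_ideal(11) by (simp add: sl_cong_def mult.assoc)
  then show ?thesis
    using G12 assms by (auto simp: delta_weight_def intro: sl_cong_scalar_inverse)
next
  case G21
  have "sl_cong q (dl * g21) (scalar (complex_of_real (1 / q)) * (g21 * dl))"
    using sl_rels_in_ideal(12) by (simp add: sl_cong_def mult.assoc)
  then show ?thesis
    using G21 assms by (auto simp: delta_weight_def intro: sl_cong_scalar_inverse)
next
  case DlInv
  have "sl_cong q (dl_inv * dl) 1" "sl_cong q (dl * dl_inv) 1"
    using sl_rels_in_ideal(8,9) by (simp_all add: sl_cong_def)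
  then have "sl_cong q (dl_inv * dl) (dl * dl_inv)"
    by (meson sl_cong_trans sl_cong_sym)
  then show ?thesis
    using DlInv by (simp add: delta_weight_def)
next
  case G11
  have "sl_cong q (dl * gen_el G11) (gen_el G11 * dl)"
    using sl_rels_in_ideal(10) by (simp add: sl_cong_def)
  with G11 show ?thesis
    by (simp add: delta_weight_def sl_cong_sym[of q "dl * gen_el G11"])
next
  case G22
  have "sl_cong q (dl * gen_el G22) (gen_el G22 * dl)"
    using sl_rels_in_ideal(13) by (simp add: sl_cong_def)
  with G22 show ?thesis
    by (simp add: delta_weight_def sl_cong_sym[of q "dl * gen_el G22"])
qed (simp add: delta_weight_def)

lemma delta_gen_pair:
  assumes "q > 0"
  shows "sl_cong q (scalar c * dl * gen_el a * (scalar d * dl * gen_el b))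
    (scalar (c * d * delta_weight q a) * (dl * dl * (gen_el a * gen_el b)))"
proof -
  have "scalar c * dl * gen_el a * (scalar d * dl * gen_el b)
      = scalar (c * d) * (dl * (gen_el a * dl) * gen_el b)"
    by (simp add: scalar_normalize)
  also have "sl_cong q \<dots> (scalar (c * d) * (dl * (scalar (delta_weight q a) * (dl * gen_el a)) * gen_el b))"
    by (intro sl_cong_mult_left sl_cong_mult_right gen_delta_commute assms)
  also have "\<dots> = scalar (c * d * delta_weight q a) * (dl * dl * (gen_el a * gen_el b))"
    by (simp add: scalar_normalize)
  finally show ?thesis .
qed

lemma delta_gen_commute:
  assumes "q > 0" and "sl_cong q (gen_el a * gen_el b) (scalar k * (gen_el b * gen_el a))"
  shows "sl_cong q (scalar c * dl * gen_el a * (scalar d * dl * gen_el b))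
    (scalar (k * delta_weight q a / delta_weight q b) * (scalar d * dl * gen_el b * (scalar c * dl * gen_el a)))"
proof -
  let ?w = "delta_weight q"
  have "sl_cong q (scalar c * dl * gen_el a * (scalar d * dl * gen_el b))
      (scalar (c * d * ?w a) * (dl * dl * (gen_el a * gen_el b)))"
    by (rule delta_gen_pair[OF assms(1)])
  also have "sl_cong q \<dots> (scalar (c * d * ?w a) * (dl * dl * (scalar k * (gen_el b * gen_el a))))"
    by (intro sl_cong_mult_left assms(2))
  also have "\<dots> = scalar (k * ?w a / ?w b) * (scalar (d * c * ?w b) * (dl * dl * (gen_el b * gen_el a)))"
    using delta_weight_nonzero[OF assms(1)]
    by (simp add: scalar_normalize mult_ac)
  also have "sl_cong q \<dots> (scalar (k * ?w a / ?w b) * (scalar d * dl * gen_el b * (scalar c * dl * gen_el a)))"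
    by (rule sl_cong_mult_left, rule sl_cong_sym, rule delta_gen_pair[OF assms(1)])
  finally show ?thesis .
qed

lemma gen_commute:
  assumes "q > 0"
  shows "sl_cong q (g12 * g11) (scalar (complex_of_real q) * (g11 * g12))"
    "sl_cong q (g21 * g11) (scalar (complex_of_real q) * (g11 * g21))"
    "sl_cong q (g22 * g12) (scalar (complex_of_real q) * (g12 * g22))"
    "sl_cong q (g22 * g21) (scalar (complex_of_real q) * (g21 * g22))"
    "sl_cong q (g21 * g12) (scalar 1 * (g12 * g21))"
    "sl_cong q (g11 * g22) (scalar (complex_of_real (1 / q)) * (g12 * g21) + 1)"
    "sl_cong q (g22 * g11) (scalar (complex_of_real q) * (g12 * g21) + 1)"
proof -
  have inv: "complex_of_real q * complex_of_real (1 / q) = 1"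
    using assms by (simp flip: of_real_mult)
  show "sl_cong q (g12 * g11) (scalar (complex_of_real q) * (g11 * g12))"
    using sl_rels_in_ideal(1) by (intro sl_cong_scalar_inverse[OF _ inv]) (simp add: sl_cong_def mult.assoc)
  show "sl_cong q (g21 * g11) (scalar (complex_of_real q) * (g11 * g21))"
    using sl_rels_in_ideal(2) by (intro sl_cong_scalar_inverse[OF _ inv]) (simp add: sl_cong_def mult.assoc)
  show "sl_cong q (g22 * g12) (scalar (complex_of_real q) * (g12 * g22))"
    using sl_rels_in_ideal(3) by (intro sl_cong_scalar_inverse[OF _ inv]) (simp add: sl_cong_def mult.assoc)
  show "sl_cong q (g22 * g21) (scalar (complex_of_real q) * (g21 * g22))"
    using sl_rels_in_ideal(4) by (intro sl_cong_scalar_inverse[OF _ inv]) (simp add: sl_cong_def mult.assoc)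
  have "sl_cong q (g12 * g21) (g21 * g12)"
    using sl_rels_in_ideal(5) by (simp add: sl_cong_def)
  then have g12_g21: "sl_cong q (g21 * g12) (g12 * g21)"
    by (rule sl_cong_sym)
  then show "sl_cong q (g21 * g12) (scalar 1 * (g12 * g21))"
    by simp
  show "sl_cong q (g11 * g22) (scalar (complex_of_real (1 / q)) * (g12 * g21) + 1)"
    using sl_rels_in_ideal(6) by (simp add: sl_cong_def mult.assoc diff_diff_eq)
  have "sl_cong q (g22 * g11) (scalar (complex_of_real q) * (g21 * g12) + 1)"
    using sl_rels_in_ideal(7) by (simp add: sl_cong_def mult.assoc diff_diff_eq)
  also have "sl_cong q \<dots> (scalar (complex_of_real q) * (g12 * g21) + 1)"
    by (intro sl_cong_add sl_cong_mult_left g12_g21 sl_cong_refl)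
  finally show "sl_cong q (g22 * g11) (scalar (complex_of_real q) * (g12 * g21) + 1)" .
qed

definition ordering_relations :: "real \<Rightarrow> complex \<Rightarrow> falg \<Rightarrow> falg \<Rightarrow> falg \<Rightarrow> falg \<Rightarrow> bool" where
  "ordering_relations q k X1 X2 X3 X4 \<longleftrightarrow>
     sl_cong q (X2 * X1) (X1 * X2) \<and> sl_cong q (X4 * X3) (X3 * X4) \<and>
     sl_cong q (X3 * X1) (scalar k * (X1 * X3)) \<and> sl_cong q (X4 * X2) (scalar k * (X2 * X4)) \<and>
     sl_cong q (X3 * X2) (scalar k * (X2 * X3)) \<and>
     sl_cong q (X4 * X1) (X1 * X4 + scalar (k - 1) * (X2 * X3))"

lemma ordering_relations_reverse:
  assumes rel: "ordering_relations q k X1 X2 X3 X4" and "k \<noteq> 0"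
  shows "ordering_relations q (1 / k) X4 X3 X2 X1"
proof -
  have inv: "1 / k * k = 1" using \<open>k \<noteq> 0\<close> by simp
  have X23: "sl_cong q (X2 * X3) (scalar (1 / k) * (X3 * X2))"
    using rel inv unfolding ordering_relations_def by (blast intro: sl_cong_scalar_inverse)
  have "sl_cong q (X1 * X4 + scalar (k - 1) * (X2 * X3) - scalar (k - 1) * (X2 * X3))
      (X4 * X1 - scalar (k - 1) * (X2 * X3))"
    using rel unfolding ordering_relations_def by (intro sl_cong_diff sl_cong_refl) (metis sl_cong_sym)
  then have "sl_cong q (X1 * X4) (X4 * X1 - scalar (k - 1) * (X2 * X3))"
    by simp
  also have "sl_cong q \<dots> (X4 * X1 - scalar (k - 1) * (scalar (1 / k) * (X3 * X2)))"
    by (intro sl_cong_diff sl_cong_refl sl_cong_mult_left X23)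
  also have "\<dots> = X4 * X1 + scalar (1 / k - 1) * (X3 * X2)"
  proof -
    have "(k - 1) * (1 / k) = - (1 / k - 1)"
      using \<open>k \<noteq> 0\<close> by (simp add: field_simps)
    then show ?thesis
      by (simp only: scalar_mult_scalar_assoc scalar_uminus mult_minus_left diff_minus_eq_add)
  qed
  finally show ?thesis
    using rel inv X23 unfolding ordering_relations_def by (blast intro: sl_cong_sym sl_cong_scalar_inverse)
qed

lemma x_commute:
  assumes "q > 0"
  shows "sl_cong q (x12 q * x11 q) (x11 q * x12 q)"
    "sl_cong q (x22 q * x21 q) (x21 q * x22 q)"
    "sl_cong q (x21 q * x11 q) (scalar (complex_of_real (q\<^sup>2)) * (x11 q * x21 q))"
    "sl_cong q (x22 q * x12 q) (scalar (complex_of_real (q\<^sup>2)) * (x12 q * x22 q))"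
    "sl_cong q (x21 q * x12 q) (scalar (complex_of_real (q\<^sup>2)) * (x12 q * x21 q))"
proof -
  note commute = gen_commute(1-5)[OF assms, THEN delta_gen_commute[OF assms]]
  note simps = x11_def x12_def x21_def x22_def delta_weight_def power2_eq_square
  show "sl_cong q (x12 q * x11 q) (x11 q * x12 q)"
    using commute(1)[of _ 1] assms by (simp add: simps)
  show "sl_cong q (x22 q * x21 q) (x21 q * x22 q)"
    using commute(4)[of 1] assms by (simp add: simps)
  show "sl_cong q (x21 q * x11 q) (scalar (complex_of_real (q\<^sup>2)) * (x11 q * x21 q))"
    using commute(2)[of _ 1] assms by (simp add: simps)
  show "sl_cong q (x22 q * x12 q) (scalar (complex_of_real (q\<^sup>2)) * (x12 q * x22 q))"
    using commute(3)[of 1] assms by (simp add: simps)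
  show "sl_cong q (x21 q * x12 q) (scalar (complex_of_real (q\<^sup>2)) * (x12 q * x21 q))"
    using commute(5) assms by (simp add: simps)
qed

lemma x22_x11_commute:
  assumes "q > 0"
  shows "sl_cong q (x22 q * x11 q)
    (x11 q * x22 q + scalar (complex_of_real (q\<^sup>2) - 1) * (x12 q * x21 q))"
proof -
  define P where "P = dl * dl * (g12 * g21)"
  let ?q = "complex_of_real q" and ?p = "complex_of_real (1 / q)"
  have "sl_cong q (x22 q * x11 q) (scalar 1 * (dl * dl * (g22 * g11)))"
    using delta_gen_pair[OF assms, of 1 G22 1 G11] by (simp add: x11_def x22_def delta_weight_def)
  also have "sl_cong q \<dots> (scalar 1 * (dl * dl * (scalar ?q * (g12 * g21) + 1)))"
    by (intro sl_cong_mult_left gen_commute(7)[OF assms])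
  also have "\<dots> = scalar ?q * P + dl * dl"
    by (simp add: P_def distrib_left mult_scalar_left_commute)
  finally have x22_x11: "sl_cong q (x22 q * x11 q) (scalar ?q * P + dl * dl)" .
  have "sl_cong q (x11 q * x22 q) (scalar 1 * (dl * dl * (g11 * g22)))"
    using delta_gen_pair[OF assms, of 1 G11 1 G22] by (simp add: x11_def x22_def delta_weight_def)
  also have "sl_cong q \<dots> (scalar 1 * (dl * dl * (scalar ?p * (g12 * g21) + 1)))"
    by (intro sl_cong_mult_left gen_commute(6)[OF assms])
  also have "\<dots> = scalar ?p * P + dl * dl"
    by (simp add: P_def distrib_left mult_scalar_left_commute)
  finally have x11_x22: "sl_cong q (x11 q * x22 q) (scalar ?p * P + dl * dl)" .
  have "complex_of_real (1 / sqrt q) * complex_of_real (sqrt q) * ?p = ?p"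
    using assms by (simp flip: of_real_mult)
  then have x12_x21: "sl_cong q (x12 q * x21 q) (scalar ?p * P)"
    using delta_gen_pair[OF assms, of "complex_of_real (1 / sqrt q)" G12 "complex_of_real (sqrt q)" G21]
    by (simp only: P_def x12_def x21_def delta_weight_def gen.case)
  have "sl_cong q (x11 q * x22 q + scalar (?q\<^sup>2 - 1) * (x12 q * x21 q))
      (scalar ?p * P + dl * dl + scalar (?q\<^sup>2 - 1) * (scalar ?p * P))"
    by (intro sl_cong_add sl_cong_mult_left x11_x22 x12_x21)
  also have "\<dots> = scalar (?p + (?q\<^sup>2 - 1) * ?p) * P + dl * dl"
    by (simp add: scalar_add distrib_right scalar_mult_scalar_assoc)
  also have "?p + (?q\<^sup>2 - 1) * ?p = ?q"
    using assms by (simp add: field_simps power2_eq_square flip: of_real_mult)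
  finally have "sl_cong q (x11 q * x22 q + scalar (complex_of_real (q\<^sup>2) - 1) * (x12 q * x21 q))
      (scalar ?q * P + dl * dl)"
    by simp
  with x22_x11 show ?thesis
    by (meson sl_cong_sym sl_cong_trans)
qed

lemma x11_x22_scaled: "x11 q = scalar 1 * dl * g11" "x22 q = scalar 1 * dl * g22"
  by (simp_all add: x11_def x22_def)

lemma ordering_relations_x:
  assumes "q > 0"
  shows "ordering_relations q (complex_of_real (q\<^sup>2)) (x11 q) (x12 q) (x21 q) (x22 q)"
  using x_commute[OF assms] x22_x11_commute[OF assms] by (simp add: ordering_relations_def)

section \<open>Ordered monomials span the Minkowski space\<close>

definition ordered_monomial :: "falg \<Rightarrow> falg \<Rightarrow> falg \<Rightarrow> falg \<Rightarrow> nat \<times> nat \<times> nat \<times> nat \<Rightarrow> falg" where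
  "ordered_monomial X1 X2 X3 X4 e = (case e of (a, b, c, d) \<Rightarrow> X1 ^ a * X2 ^ b * X3 ^ c * X4 ^ d)"

definition monomial_comb ::
    "falg \<Rightarrow> falg \<Rightarrow> falg \<Rightarrow> falg \<Rightarrow> (nat \<times> nat \<times> nat \<times> nat \<Rightarrow>\<^sub>0 complex) \<Rightarrow> falg" where
  "monomial_comb X1 X2 X3 X4 C = keys_sum (\<lambda>e c. scalar c * ordered_monomial X1 X2 X3 X4 e) C"

lemma monomial_comb_eq:
  "monomial_comb X1 X2 X3 X4 C =
    (\<Sum>e\<in>Poly_Mapping.keys C. scalar (Poly_Mapping.lookup C e) * ordered_monomial X1 X2 X3 X4 e)"
  by (simp add: monomial_comb_def keys_sum_def)

lemma monomial_comb_zero [simp]: "monomial_comb X1 X2 X3 X4 0 = 0"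
  by (simp add: monomial_comb_def)

lemma monomial_comb_add:
  "monomial_comb X1 X2 X3 X4 (C + D) = monomial_comb X1 X2 X3 X4 C + monomial_comb X1 X2 X3 X4 D"
  unfolding monomial_comb_def by (rule keys_sum_add) (simp_all add: scalar_add distrib_right)

lemma monomial_comb_single:
  "monomial_comb X1 X2 X3 X4 (Poly_Mapping.single e c) = scalar c * ordered_monomial X1 X2 X3 X4 e"
  unfolding monomial_comb_def by (rule keys_sum_single) simp

definition ordered_span :: "real \<Rightarrow> falg \<Rightarrow> falg \<Rightarrow> falg \<Rightarrow> falg \<Rightarrow> falg set" where
  "ordered_span q X1 X2 X3 X4 = {f. \<exists>C. sl_cong q f (monomial_comb X1 X2 X3 X4 C)}"

lemma sl_cong_power_commute:
  assumes "sl_cong q (Y * X) (scalar c * (X * Y))"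
  shows "sl_cong q (Y * X ^ n) (scalar (c ^ n) * (X ^ n * Y))"
proof (induction n)
  case (Suc n)
  have "Y * X ^ Suc n = (Y * X) * X ^ n"
    by (simp add: mult.assoc)
  also have "sl_cong q \<dots> ((scalar c * (X * Y)) * X ^ n)"
    by (rule sl_cong_mult_right[OF assms])
  also have "\<dots> = scalar c * (X * (Y * X ^ n))"
    by (simp add: mult.assoc)
  also have "sl_cong q \<dots> (scalar c * (X * (scalar (c ^ n) * (X ^ n * Y))))"
    by (intro sl_cong_mult_left Suc.IH)
  also have "\<dots> = scalar (c ^ Suc n) * (X ^ Suc n * Y)"
    by (simp add: mult_scalar_left_commute[of X] scalar_mult_scalar_assoc mult.assoc)
  finally show ?case .
qed simp

context
  fixes q :: real and X1 X2 X3 X4 :: falg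
begin

lemma ordered_span_cong:
  assumes "sl_cong q f g" and "g \<in> ordered_span q X1 X2 X3 X4"
  shows "f \<in> ordered_span q X1 X2 X3 X4"
proof -
  obtain C where "sl_cong q g (monomial_comb X1 X2 X3 X4 C)"
    using assms(2) unfolding ordered_span_def by blast
  with assms(1) have "sl_cong q f (monomial_comb X1 X2 X3 X4 C)"
    by (rule sl_cong_trans)
  then show ?thesis
    unfolding ordered_span_def by blast
qed

lemma ordered_span_zero: "0 \<in> ordered_span q X1 X2 X3 X4"
  unfolding ordered_span_def by (auto intro!: exI[of _ 0])

lemma ordered_span_add: "f \<in> ordered_span q X1 X2 X3 X4 \<Longrightarrow> g \<in> ordered_span q X1 X2 X3 X4 \<Longrightarrow> f + g \<in> ordered_span q X1 X2 X3 X4"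
proof -
  assume "f \<in> ordered_span q X1 X2 X3 X4" "g \<in> ordered_span q X1 X2 X3 X4"
  then obtain C D where "sl_cong q f (monomial_comb X1 X2 X3 X4 C)" "sl_cong q g (monomial_comb X1 X2 X3 X4 D)"
    unfolding ordered_span_def by blast
  then have "sl_cong q (f + g) (monomial_comb X1 X2 X3 X4 (C + D))"
    unfolding monomial_comb_add by (rule sl_cong_add)
  then show ?thesis
    unfolding ordered_span_def by blast
qed

lemma ordered_span_sum: "(\<And>i. i \<in> A \<Longrightarrow> f i \<in> ordered_span q X1 X2 X3 X4) \<Longrightarrow> (\<Sum>i\<in>A. f i) \<in> ordered_span q X1 X2 X3 X4"
  by (induction A rule: infinite_finite_induct) (auto intro: ordered_span_zero ordered_span_add)

lemma ordered_span_monomial: "scalar c * ordered_monomial X1 X2 X3 X4 e \<in> ordered_span q X1 X2 X3 X4"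
  unfolding ordered_span_def by (auto intro!: exI[of _ "Poly_Mapping.single e c"] simp: monomial_comb_single)

lemma ordered_span_mult_left:
  assumes X: "\<And>e. X * ordered_monomial X1 X2 X3 X4 e \<in> ordered_span q X1 X2 X3 X4"
    and f: "f \<in> ordered_span q X1 X2 X3 X4"
  shows "X * f \<in> ordered_span q X1 X2 X3 X4"
proof -
  have scaled: "scalar c * (X * ordered_monomial X1 X2 X3 X4 e) \<in> ordered_span q X1 X2 X3 X4" for c e
  proof -
    obtain D where "sl_cong q (X * ordered_monomial X1 X2 X3 X4 e) (monomial_comb X1 X2 X3 X4 D)"
      using X unfolding ordered_span_def by blast
    then have "sl_cong q (scalar c * (X * ordered_monomial X1 X2 X3 X4 e))
        (scalar c * monomial_comb X1 X2 X3 X4 D)"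
      by (rule sl_cong_mult_left)
    also have "\<dots> = (\<Sum>e\<in>Poly_Mapping.keys D.
        scalar (c * Poly_Mapping.lookup D e) * ordered_monomial X1 X2 X3 X4 e)"
      by (simp add: monomial_comb_eq sum_distrib_left scalar_mult_scalar_assoc)
    finally show ?thesis
      by (rule ordered_span_cong) (intro ordered_span_sum ordered_span_monomial)
  qed
  obtain C where C: "sl_cong q f (monomial_comb X1 X2 X3 X4 C)"
    using f unfolding ordered_span_def by blast
  then have "sl_cong q (X * f) (X * monomial_comb X1 X2 X3 X4 C)"
    by (rule sl_cong_mult_left)
  also have "X * monomial_comb X1 X2 X3 X4 C
      = (\<Sum>e\<in>Poly_Mapping.keys C. scalar (Poly_Mapping.lookup C e) * (X * ordered_monomial X1 X2 X3 X4 e))"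
    by (simp add: monomial_comb_eq sum_distrib_left mult_scalar_left_commute[of X])
  finally show ?thesis
    by (rule ordered_span_cong) (intro ordered_span_sum scaled)
qed

lemma ordered_span_scalar: "f \<in> ordered_span q X1 X2 X3 X4 \<Longrightarrow> scalar c * f \<in> ordered_span q X1 X2 X3 X4"
  by (rule ordered_span_mult_left[OF ordered_span_monomial])

context
  fixes k :: complex
  assumes rel: "ordering_relations q k X1 X2 X3 X4"
begin

lemma ordered_span_X1: "X1 * ordered_monomial X1 X2 X3 X4 e \<in> ordered_span q X1 X2 X3 X4"
proof -
  obtain a b c d where e: "e = (a, b, c, d)" by (cases e) auto
  have "X1 * ordered_monomial X1 X2 X3 X4 e = scalar 1 * ordered_monomial X1 X2 X3 X4 (Suc a, b, c, d)"
    by (simp add: e ordered_monomial_def mult.assoc)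
  then show ?thesis
    by (simp only: ordered_span_monomial)
qed

lemma ordered_span_X2: "X2 * ordered_monomial X1 X2 X3 X4 e \<in> ordered_span q X1 X2 X3 X4"
proof -
  obtain a b c d where e: "e = (a, b, c, d)" by (cases e) auto
  have "sl_cong q (X2 * X1) (scalar 1 * (X1 * X2))"
    using rel by (simp add: ordering_relations_def)
  then have "sl_cong q ((X2 * X1 ^ a) * (X2 ^ b * X3 ^ c * X4 ^ d))
      ((scalar (1 ^ a) * (X1 ^ a * X2)) * (X2 ^ b * X3 ^ c * X4 ^ d))"
    by (intro sl_cong_mult_right sl_cong_power_commute)
  then have "sl_cong q (X2 * ordered_monomial X1 X2 X3 X4 e) (scalar 1 * ordered_monomial X1 X2 X3 X4 (a, Suc b, c, d))"
    by (simp add: e ordered_monomial_def mult.assoc)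
  then show ?thesis
    using ordered_span_cong ordered_span_monomial by blast
qed

lemma ordered_span_X3: "X3 * ordered_monomial X1 X2 X3 X4 e \<in> ordered_span q X1 X2 X3 X4"
proof -
  obtain a b c d where e: "e = (a, b, c, d)" by (cases e) auto
  have X31: "sl_cong q (X3 * X1) (scalar k * (X1 * X3))"
    and X32: "sl_cong q (X3 * X2) (scalar k * (X2 * X3))"
    using rel by (simp_all add: ordering_relations_def)
  have "X3 * ordered_monomial X1 X2 X3 X4 e = (X3 * X1 ^ a) * (X2 ^ b * X3 ^ c * X4 ^ d)"
    by (simp add: e ordered_monomial_def mult.assoc)
  also have "sl_cong q \<dots> ((scalar (k ^ a) * (X1 ^ a * X3)) * (X2 ^ b * X3 ^ c * X4 ^ d))"
    by (intro sl_cong_mult_right sl_cong_power_commute X31)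
  also have "\<dots> = scalar (k ^ a) * (X1 ^ a * (X3 * X2 ^ b) * (X3 ^ c * X4 ^ d))"
    by (simp add: mult.assoc)
  also have "sl_cong q \<dots> (scalar (k ^ a) * (X1 ^ a * (scalar (k ^ b) * (X2 ^ b * X3)) * (X3 ^ c * X4 ^ d)))"
    by (intro sl_cong_mult_left sl_cong_mult_right sl_cong_power_commute X32)
  also have "\<dots> = scalar (k ^ a * k ^ b) * ordered_monomial X1 X2 X3 X4 (a, b, Suc c, d)"
    by (simp add: ordered_monomial_def mult.assoc mult_scalar_left_commute[of "X1 ^ a"]
        scalar_mult_scalar_assoc)
  finally show ?thesis
    using ordered_span_cong ordered_span_monomial by blast
qed

lemma ordered_span_X4: "X4 * ordered_monomial X1 X2 X3 X4 e \<in> ordered_span q X1 X2 X3 X4"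
proof -
  obtain a b c d where e: "e = (a, b, c, d)" by (cases e) auto
  have X43: "sl_cong q (X4 * X3) (scalar 1 * (X3 * X4))"
    and X42: "sl_cong q (X4 * X2) (scalar k * (X2 * X4))"
    and X41: "sl_cong q (X4 * X1) (X1 * X4 + scalar (k - 1) * (X2 * X3))"
    using rel by (simp_all add: ordering_relations_def)
  have "X4 * ordered_monomial X1 X2 X3 X4 (a, b, c, d) \<in> ordered_span q X1 X2 X3 X4" for b c d
  proof (induction a)
    case 0
    have "X4 * ordered_monomial X1 X2 X3 X4 (0, b, c, d) = (X4 * X2 ^ b) * (X3 ^ c * X4 ^ d)"
      by (simp add: ordered_monomial_def mult.assoc)
    also have "sl_cong q \<dots> ((scalar (k ^ b) * (X2 ^ b * X4)) * (X3 ^ c * X4 ^ d))"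
      by (intro sl_cong_mult_right sl_cong_power_commute X42)
    also have "\<dots> = scalar (k ^ b) * (X2 ^ b * (X4 * X3 ^ c) * X4 ^ d)"
      by (simp add: mult.assoc)
    also have "sl_cong q \<dots> (scalar (k ^ b) * (X2 ^ b * (scalar (1 ^ c) * (X3 ^ c * X4)) * X4 ^ d))"
      by (intro sl_cong_mult_left sl_cong_mult_right sl_cong_power_commute X43)
    also have "\<dots> = scalar (k ^ b) * ordered_monomial X1 X2 X3 X4 (0, b, c, Suc d)"
      by (simp add: ordered_monomial_def mult.assoc)
    finally show ?case
      using ordered_span_cong ordered_span_monomial by blast
  next
    case (Suc a)
    have "X4 * ordered_monomial X1 X2 X3 X4 (Suc a, b, c, d) = (X4 * X1) * ordered_monomial X1 X2 X3 X4 (a, b, c, d)"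
      by (simp add: ordered_monomial_def mult.assoc)
    also have "sl_cong q \<dots> ((X1 * X4 + scalar (k - 1) * (X2 * X3)) * ordered_monomial X1 X2 X3 X4 (a, b, c, d))"
      by (rule sl_cong_mult_right[OF X41])
    also have "\<dots> = X1 * (X4 * ordered_monomial X1 X2 X3 X4 (a, b, c, d))
        + scalar (k - 1) * (X2 * (X3 * ordered_monomial X1 X2 X3 X4 (a, b, c, d)))"
      by (simp add: distrib_right mult.assoc)
    finally show ?case
      by (rule ordered_span_cong)
        (intro ordered_span_add ordered_span_scalar ordered_span_mult_left[OF ordered_span_X1] 
          ordered_span_mult_left[OF ordered_span_X2] ordered_span_X3 Suc.IH)
  qed
  then show ?thesis
    using e by simp
qed

end

end

lemma minkowski_in_ordered_span:
  assumes rel: "ordering_relations q k X1 X2 X3 X4"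
    and gens: "{x11 q, x12 q, x21 q, x22 q} = {X1, X2, X3, X4}"
    and "a \<in> minkowski q"
  shows "a \<in> ordered_span q X1 X2 X3 X4"
proof -
  let ?span = "ordered_span q X1 X2 X3 X4"
  have gen: "X * g \<in> ?span" if "X \<in> {x11 q, x12 q, x21 q, x22 q}" "g \<in> ?span" for X g
    using that unfolding gens
    by (auto intro: ordered_span_mult_left ordered_span_X1[OF rel] ordered_span_X2[OF rel]
        ordered_span_X3[OF rel] ordered_span_X4[OF rel])
  have "\<forall>g\<in>?span. a * g \<in> ?span"
    using \<open>a \<in> minkowski q\<close>
  proof (induction rule: minkowski.induct)
    case (add a b)
    then show ?case by (simp add: distrib_right ordered_span_add)
  next
    case (mult a b)
    then show ?case by (simp add: mult.assoc)
  qed (simp_all add: gen ordered_span_scalar)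
  moreover have "1 \<in> ?span"
    using ordered_span_monomial[where c = 1 and e = "(0, 0, 0, 0)"] by (simp add: ordered_monomial_def)
  ultimately show ?thesis
    by force
qed

section \<open>Representations by weighted shifts on \<open>\<int>\<^sup>2\<close>\<close>

type_synonym site = "int \<times> int"

text \<open>Each generator \<open>g\<close> acts on finitely supported functions on \<open>\<int>\<^sup>2\<close> by the weighted shift
  \<open>e\<^sub>x \<mapsto> w g x \<cdot> e\<^bsub>x + v g\<^esub>\<close>; \<open>rep_entry v w f y x\<close> is the \<open>(y, x)\<close> matrix entry of the operator
  representing \<open>f\<close>.\<close>

fun shift_list :: "(gen \<Rightarrow> site) \<Rightarrow> gen list \<Rightarrow> site" where
  "shift_list v [] = 0"
| "shift_list v (g # l) = v g + shift_list v l"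

fun weight_list :: "(gen \<Rightarrow> site) \<Rightarrow> (gen \<Rightarrow> site \<Rightarrow> complex) \<Rightarrow> gen list \<Rightarrow> site \<Rightarrow> complex" where
  "weight_list v w [] x = 1"
| "weight_list v w (g # l) x = w g (x + shift_list v l) * weight_list v w l x"

fun word_shift :: "(gen \<Rightarrow> site) \<Rightarrow> word \<Rightarrow> site" where
  "word_shift v (Word l) = shift_list v l"

fun word_weight :: "(gen \<Rightarrow> site) \<Rightarrow> (gen \<Rightarrow> site \<Rightarrow> complex) \<Rightarrow> word \<Rightarrow> site \<Rightarrow> complex" where
  "word_weight v w (Word l) x = weight_list v w l x"

definition word_entry :: "(gen \<Rightarrow> site) \<Rightarrow> (gen \<Rightarrow> site \<Rightarrow> complex) \<Rightarrow> word \<Rightarrow> site \<Rightarrow> site \<Rightarrow> complex" where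
  "word_entry v w u y x = (if y = x + word_shift v u then word_weight v w u x else 0)"

definition rep_entry :: "(gen \<Rightarrow> site) \<Rightarrow> (gen \<Rightarrow> site \<Rightarrow> complex) \<Rightarrow> falg \<Rightarrow> site \<Rightarrow> site \<Rightarrow> complex" where
  "rep_entry v w f y x = keys_sum (\<lambda>u c. c * word_entry v w u y x) f"

definition column_support :: "(gen \<Rightarrow> site) \<Rightarrow> falg \<Rightarrow> site \<Rightarrow> site set" where
  "column_support v f x = (\<lambda>u. x + word_shift v u) ` Poly_Mapping.keys f"

context
  fixes v :: "gen \<Rightarrow> site" and w :: "gen \<Rightarrow> site \<Rightarrow> complex"
begin

lemma shift_list_append: "shift_list v (a @ b) = shift_list v a + shift_list v b"
  by (induction a) (auto simp: add.assoc)

lemma weight_list_append: "weight_list v w (a @ b) x = weight_list v w a (x + shift_list v b) * weight_list v w b x"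
  by (induction a) (auto simp: shift_list_append add.assoc add.commute add.left_commute)

lemma word_shift_plus: "word_shift v (u + u') = word_shift v u + word_shift v u'"
  by (cases u; cases u') (simp add: shift_list_append)

lemma word_weight_plus: "word_weight v w (u + u') x = word_weight v w u (x + word_shift v u') * word_weight v w u' x"
  by (cases u; cases u') (simp add: weight_list_append)

lemma rep_entry_zero [simp]: "rep_entry v w 0 y x = 0"
  by (simp add: rep_entry_def)

lemma rep_entry_add: "rep_entry v w (f + g) y x = rep_entry v w f y x + rep_entry v w g y x"
  unfolding rep_entry_def by (rule keys_sum_add) (simp_all add: distrib_right)

lemma rep_entry_single: "rep_entry v w (Poly_Mapping.single u c) y x = c * word_entry v w u y x"
  unfolding rep_entry_def by (rule keys_sum_single) simp

lemma rep_entry_uminus: "rep_entry v w (- f) y x = - rep_entry v w f y x"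
  using rep_entry_add[of f "- f" y x] by (simp add: eq_neg_iff_add_eq_0 add.commute)

lemma rep_entry_diff: "rep_entry v w (f - g) y x = rep_entry v w f y x - rep_entry v w g y x"
  using rep_entry_add[of f "- g"] rep_entry_uminus[of g] by simp

lemma rep_entry_sum: "rep_entry v w (\<Sum>i\<in>A. f i) y x = (\<Sum>i\<in>A. rep_entry v w (f i) y x)"
  by (induction A rule: infinite_finite_induct) (auto simp: rep_entry_add)

lemma rep_entry_one: "rep_entry v w 1 y x = (if y = x then 1 else 0)"
  by (simp add: one_falg_single rep_entry_single word_entry_def)

lemma rep_entry_gen: "rep_entry v w (gen_el g) y x = (if y = x + v g then w g x else 0)"
  by (simp add: gen_el_def rep_entry_single word_entry_def)

lemma rep_entry_single_mult:
  "rep_entry v w (Poly_Mapping.single u c * g) y x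
    = c * word_weight v w u (y - word_shift v u) * rep_entry v w g (y - word_shift v u) x"
proof (induction g rule: falg_single_induct)
  case (add g u' c')
  have "(y = x + word_shift v (u + u')) \<longleftrightarrow> (y - word_shift v u = x + word_shift v u')"
    by (auto simp: word_shift_plus algebra_simps)
  then have "rep_entry v w (Poly_Mapping.single u c * Poly_Mapping.single u' c') y x
      = c * word_weight v w u (y - word_shift v u) * rep_entry v w (Poly_Mapping.single u' c') (y - word_shift v u) x"
    by (auto simp: mult_single rep_entry_single word_entry_def word_weight_plus)
  with add show ?case
    by (simp add: distrib_left rep_entry_add algebra_simps)
qed simp

lemma rep_entry_scalar: "rep_entry v w (scalar c * f) y x = c * rep_entry v w f y x"
  by (simp add: scalar_def rep_entry_single_mult zero_word_Word)

lemma rep_entry_outside_column_support: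
  "y \<notin> column_support v f x \<Longrightarrow> rep_entry v w f y x = 0"
  unfolding rep_entry_def keys_sum_def column_support_def word_entry_def
  by (rule sum.neutral) auto

lemma rep_entry_mult:
  assumes "finite Z" "\<And>z. z \<notin> Z \<Longrightarrow> rep_entry v w g z x = 0"
  shows "rep_entry v w (f * g) y x = (\<Sum>z\<in>Z. rep_entry v w f y z * rep_entry v w g z x)"
proof (induction f rule: falg_single_induct)
  case (add f u c)
  let ?z = "y - word_shift v u"
  have "(\<Sum>z\<in>Z. rep_entry v w (Poly_Mapping.single u c) y z * rep_entry v w g z x)
      = (\<Sum>z\<in>Z. (if z = ?z then c * word_weight v w u ?z * rep_entry v w g ?z x else 0))"
    by (rule sum.cong) (auto simp: rep_entry_single word_entry_def algebra_simps)
  also have "\<dots> = rep_entry v w (Poly_Mapping.single u c * g) y x"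
    using assms by (auto simp: rep_entry_single_mult)
  finally show ?case
    using add by (simp add: distrib_right rep_entry_add sum.distrib)
qed simp

lemma rep_entry_mult_column:
  "rep_entry v w (f * g) y x = (\<Sum>z\<in>column_support v g x. rep_entry v w f y z * rep_entry v w g z x)"
  by (rule rep_entry_mult) (auto simp: column_support_def intro: rep_entry_outside_column_support)

lemma rep_entry_mult_gen: "rep_entry v w (f * gen_el g) y x = rep_entry v w f y (x + v g) * w g x"
proof -
  have "rep_entry v w (f * gen_el g) y x
      = (\<Sum>z\<in>{x + v g}. rep_entry v w f y z * rep_entry v w (gen_el g) z x)"
    by (rule rep_entry_mult) (auto simp: rep_entry_gen)
  then show ?thesis by (simp add: rep_entry_gen)
qed

end

lemma dagger_keys_sum: "dagger f = keys_sum (\<lambda>u c. scalar (cnj c) * dag_word u) f"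
  by (simp add: dagger_def keys_sum_def)

lemma dagger_zero [simp]: "dagger 0 = 0"
  by (simp add: dagger_def)

lemma dagger_add: "dagger (f + g) = dagger f + dagger g"
  unfolding dagger_keys_sum by (rule keys_sum_add) (simp_all add: scalar_add distrib_right)

lemma dagger_single: "dagger (Poly_Mapping.single u c) = scalar (cnj c) * dag_word u"
  unfolding dagger_keys_sum by (rule keys_sum_single) simp

lemma dagger_sum: "dagger (\<Sum>i\<in>A. f i) = (\<Sum>i\<in>A. dagger (f i))"
  by (induction A rule: infinite_finite_induct) (simp_all add: dagger_add)

lemma dagger_scalar: "dagger (scalar c * f) = scalar (cnj c) * dagger f"
proof (induction f rule: falg_single_induct)
  case (add f u d)
  have "scalar c * Poly_Mapping.single u d = Poly_Mapping.single u (c * d)"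
    by (simp add: scalar_def mult_single)
  with add show ?case
    by (simp add: distrib_left dagger_add dagger_single scalar_mult_scalar_assoc)
qed simp

context
  fixes v :: "gen \<Rightarrow> site" and w :: "gen \<Rightarrow> site \<Rightarrow> complex"
  assumes dag_gen: "\<And>g y x. rep_entry v w (dag_gen g) y x = cnj (rep_entry v w (gen_el g) x y)"
begin

lemma rep_entry_dag_list: "rep_entry v w (dag_list l) y x = cnj (word_entry v w (Word l) x y)"
proof (induction l arbitrary: x)
  case Nil
  then show ?case by (auto simp: rep_entry_one word_entry_def)
next
  case (Cons g l)
  have "rep_entry v w (dag_list (g # l)) y x
      = (\<Sum>z\<in>{x - v g}. rep_entry v w (dag_list l) y z * rep_entry v w (dag_gen g) z x)"
    unfolding dag_list.simps by (rule rep_entry_mult) (auto simp: dag_gen rep_entry_gen)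
  also have "\<dots> = cnj (word_entry v w (Word l) (x - v g) y) * cnj (w g (x - v g))"
    by (simp add: Cons dag_gen rep_entry_gen)
  also have "\<dots> = cnj (word_entry v w (Word (g # l)) x y)"
    by (auto simp: word_entry_def algebra_simps)
  finally show ?case .
qed

lemma rep_entry_dagger: "rep_entry v w (dagger f) y x = cnj (rep_entry v w f x y)"
proof -
  have "rep_entry v w (dagger f) y x
      = (\<Sum>u\<in>Poly_Mapping.keys f. cnj (Poly_Mapping.lookup f u) * rep_entry v w (dag_word u) y x)"
    by (simp add: dagger_def rep_entry_sum rep_entry_scalar)
  also have "\<dots> = (\<Sum>u\<in>Poly_Mapping.keys f. cnj (Poly_Mapping.lookup f u * word_entry v w u x y))"
  proof (rule sum.cong)
    fix u
    show "cnj (Poly_Mapping.lookup f u) * rep_entry v w (dag_word u) y x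
        = cnj (Poly_Mapping.lookup f u * word_entry v w u x y)"
      by (cases u) (simp add: rep_entry_dag_list)
  qed simp
  also have "\<dots> = cnj (rep_entry v w f x y)"
    by (simp add: rep_entry_def keys_sum_def)
  finally show ?thesis .
qed

lemma rep_entry_dagger_mult_diagonal:
  "rep_entry v w (dagger f * f) x x
    = complex_of_real (\<Sum>z\<in>column_support v f x. (cmod (rep_entry v w f z x))\<^sup>2)"
proof -
  have "cnj a * a = complex_of_real ((cmod a)\<^sup>2)" for a :: complex
    by (metis complex_norm_square mult.commute)
  then show ?thesis
    by (simp only: rep_entry_mult_column rep_entry_dagger of_real_sum)
qed

end

text \<open>A \<open>*\<close>-representation of \<open>SL(2)\<^sub>q\<close>-tilde on the functions supported in \<open>G\<close>.\<close>

definition star_rep :: "real \<Rightarrow> (gen \<Rightarrow> site) \<Rightarrow> (gen \<Rightarrow> site \<Rightarrow> complex) \<Rightarrow> site set \<Rightarrow> bool" where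
  "star_rep q v w G \<longleftrightarrow>
     (\<forall>g y x. rep_entry v w (dag_gen g) y x = cnj (rep_entry v w (gen_el g) x y)) \<and>
     (\<forall>g x. x \<in> G \<longrightarrow> w g x \<noteq> 0 \<longrightarrow> x + v g \<in> G) \<and>
     (\<forall>r\<in>sl_rels q. \<forall>x\<in>G. \<forall>y. rep_entry v w r y x = 0)"

context
  fixes q v w G
  assumes rep: "star_rep q v w G"
begin

lemma star_rep_column_closed:
  assumes "x \<in> G" and "rep_entry v w f y x \<noteq> 0"
  shows "y \<in> G"
proof -
  have invariant: "z \<in> G \<Longrightarrow> w g z \<noteq> 0 \<Longrightarrow> z + v g \<in> G" for g z
    using rep unfolding star_rep_def by blast
  have "weight_list v w l x \<noteq> 0 \<Longrightarrow> x + shift_list v l \<in> G" for l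
  proof (induction l)
    case (Cons g l)
    then have "x + shift_list v l + v g \<in> G"
      by (intro invariant) auto
    then show ?case by (simp add: algebra_simps)
  qed (use \<open>x \<in> G\<close> in simp)
  moreover obtain u where "word_entry v w u y x \<noteq> 0"
    using assms(2) unfolding rep_entry_def keys_sum_def by (metis (no_types, lifting) mult_zero_right sum.neutral)
  ultimately show ?thesis
    by (cases u) (auto simp: word_entry_def split: if_splits)
qed

lemma star_rep_ideal:
  assumes "f \<in> sl_ideal q" and "x \<in> G"
  shows "rep_entry v w f y x = 0"
  using assms
proof (induction arbitrary: x y rule: sl_ideal.induct)
  case (rel r)
  then show ?case using rep unfolding star_rep_def by blast
next
  case (add a b)
  then show ?case by (simp add: rep_entry_add)
next
  case (mult a s t)
  have "rep_entry v w (s * a) y z * rep_entry v w t z x = 0" for z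
  proof (cases "rep_entry v w t z x = 0")
    case False
    then have "z \<in> G" using star_rep_column_closed \<open>x \<in> G\<close> by blast
    with mult.IH show ?thesis by (simp add: rep_entry_mult_column)
  qed simp
  then show ?case
    by (simp only: rep_entry_mult_column[of v w "s * a" t y x] sum.neutral_const)
qed simp

lemma star_rep_sum_dagger:
  assumes "finite A" and "i \<in> A" and "x \<in> G"
    and "(\<Sum>j\<in>A. dagger (f j) * f j) \<in> sl_ideal q"
  shows "rep_entry v w (f i) y x = 0"
proof -
  have dag_gen: "\<And>g y x. rep_entry v w (dag_gen g) y x = cnj (rep_entry v w (gen_el g) x y)"
    using rep unfolding star_rep_def by blast
  let ?sq = "\<lambda>j z. (cmod (rep_entry v w (f j) z x))\<^sup>2"
  have "complex_of_real (\<Sum>j\<in>A. \<Sum>z\<in>column_support v (f j) x. ?sq j z) = 0"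
    using star_rep_ideal[OF assms(4,3), of x]
    by (simp only: rep_entry_sum rep_entry_dagger_mult_diagonal[OF dag_gen] flip: of_real_sum)
  then have "(\<Sum>j\<in>A. \<Sum>z\<in>column_support v (f j) x. ?sq j z) = 0"
    by (simp only: of_real_eq_0_iff)
  then have "(\<Sum>z\<in>column_support v (f i) x. ?sq i z) = 0"
    using assms(1,2) by (simp add: sum_nonneg sum_nonneg_eq_0_iff)
  then have "y \<in> column_support v (f i) x \<Longrightarrow> ?sq i y = 0"
    by (subst (asm) sum_nonneg_eq_0_iff) (auto simp: column_support_def)
  then show ?thesis
    using rep_entry_outside_column_support by fastforce
qed

end

definition weighted_shift ::
    "(gen \<Rightarrow> site) \<Rightarrow> (gen \<Rightarrow> site \<Rightarrow> complex) \<Rightarrow> falg \<Rightarrow> site \<Rightarrow> (site \<Rightarrow> complex) \<Rightarrow> bool" where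
  "weighted_shift v w f u th \<longleftrightarrow> (\<forall>y x. rep_entry v w f y x = (if y = x + u then th x else 0))"

definition site_scale :: "nat \<Rightarrow> site \<Rightarrow> site" where
  "site_scale n u = (int n * fst u, int n * snd u)"

definition power_weight :: "(site \<Rightarrow> complex) \<Rightarrow> site \<Rightarrow> nat \<Rightarrow> site \<Rightarrow> complex" where
  "power_weight th u n x = (\<Prod>j<n. th (x + site_scale j u))"

definition monomial_shift :: "site \<Rightarrow> site \<Rightarrow> site \<Rightarrow> site \<Rightarrow> nat \<times> nat \<times> nat \<times> nat \<Rightarrow> site" where
  "monomial_shift u1 u2 u3 u4 e = (case e of (a, b, c, d) \<Rightarrow>
     site_scale a u1 + site_scale b u2 + site_scale c u3 + site_scale d u4)"

definition monomial_weight :: "(site \<Rightarrow> complex) \<Rightarrow> (site \<Rightarrow> complex) \<Rightarrow> (site \<Rightarrow> complex) \<Rightarrow> (site \<Rightarrow> complex)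
    \<Rightarrow> site \<Rightarrow> site \<Rightarrow> site \<Rightarrow> site \<Rightarrow> nat \<times> nat \<times> nat \<times> nat \<Rightarrow> site \<Rightarrow> complex" where
  "monomial_weight t1 t2 t3 t4 u1 u2 u3 u4 e x = (case e of (a, b, c, d) \<Rightarrow>
     power_weight t1 u1 a (x + site_scale d u4 + site_scale c u3 + site_scale b u2)
     * power_weight t2 u2 b (x + site_scale d u4 + site_scale c u3)
     * power_weight t3 u3 c (x + site_scale d u4) * power_weight t4 u4 d x)"

lemma site_scale_0 [simp]: "site_scale 0 u = 0"
  by (simp add: site_scale_def zero_prod_def)

lemma site_scale_Suc: "site_scale (Suc n) u = site_scale n u + u"
  by (cases u) (simp add: site_scale_def algebra_simps)

context
  fixes v :: "gen \<Rightarrow> site" and w :: "gen \<Rightarrow> site \<Rightarrow> complex"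
begin

lemma weighted_shift_rep_entry:
  "weighted_shift v w f u th \<Longrightarrow> rep_entry v w f y x = (if y = x + u then th x else 0)"
  unfolding weighted_shift_def by blast

lemma weighted_shift_cong:
  "weighted_shift v w f u th \<Longrightarrow> u = u' \<Longrightarrow> (\<And>x. th x = th' x) \<Longrightarrow> weighted_shift v w f u' th'"
  by (simp add: weighted_shift_def)

lemma weighted_shift_mult:
  assumes "weighted_shift v w f u th" and "weighted_shift v w g u' th'"
  shows "weighted_shift v w (f * g) (u' + u) (\<lambda>x. th (x + u') * th' x)"
  unfolding weighted_shift_def
proof (intro allI)
  fix y x
  have "rep_entry v w (f * g) y x = (\<Sum>z\<in>{x + u'}. rep_entry v w f y z * rep_entry v w g z x)"
    by (rule rep_entry_mult) (simp_all add: weighted_shift_rep_entry[OF assms(2)])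
  then show "rep_entry v w (f * g) y x = (if y = x + (u' + u) then th (x + u') * th' x else 0)"
    by (simp add: weighted_shift_rep_entry[OF assms(1)] weighted_shift_rep_entry[OF assms(2)] add.assoc)
qed

lemma weighted_shift_power:
  assumes "weighted_shift v w f u th"
  shows "weighted_shift v w (f ^ n) (site_scale n u) (power_weight th u n)"
proof (induction n)
  case 0
  then show ?case by (simp add: weighted_shift_def rep_entry_one power_weight_def)
next
  case (Suc n)
  from weighted_shift_mult[OF assms Suc.IH] show ?case
    by (simp add: site_scale_Suc power_weight_def mult.commute)
qed

lemma weighted_shift_delta_gen:
  "weighted_shift v w (scalar c * dl * gen_el g) (v g + v Dl) (\<lambda>x. c * (w Dl (x + v g) * w g x))"
  by (auto simp: weighted_shift_def rep_entry_mult_gen rep_entry_gen rep_entry_scalar mult.assoc add.assoc)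

lemma weighted_shift_ordered_monomial:
  assumes "weighted_shift v w Z1 u1 t1" "weighted_shift v w Z2 u2 t2"
    "weighted_shift v w Z3 u3 t3" "weighted_shift v w Z4 u4 t4"
  shows "weighted_shift v w (ordered_monomial Z1 Z2 Z3 Z4 e) (monomial_shift u1 u2 u3 u4 e)
    (monomial_weight t1 t2 t3 t4 u1 u2 u3 u4 e)"
proof -
  obtain a b c d where e: "e = (a, b, c, d)" by (cases e) auto
  have "weighted_shift v w (Z1 ^ a * Z2 ^ b * Z3 ^ c * Z4 ^ d)
      (site_scale d u4 + (site_scale c u3 + (site_scale b u2 + site_scale a u1)))
      (\<lambda>x. power_weight t1 u1 a (x + site_scale d u4 + site_scale c u3 + site_scale b u2)
        * power_weight t2 u2 b (x + site_scale d u4 + site_scale c u3)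
        * power_weight t3 u3 c (x + site_scale d u4) * power_weight t4 u4 d x)"
    using weighted_shift_mult[OF weighted_shift_mult[OF weighted_shift_mult]]
      weighted_shift_power[OF assms(1)] weighted_shift_power[OF assms(2)]
      weighted_shift_power[OF assms(3)] weighted_shift_power[OF assms(4)]
    by (simp add: add.assoc)
  then show ?thesis
    by (simp add: e ordered_monomial_def monomial_shift_def monomial_weight_def[abs_def] ac_simps)
qed

end

section \<open>Linear independence of ordered monomials\<close>

lemma coefficient_sums_vanish:
  fixes c :: "'a \<Rightarrow> complex" and g :: "'a \<Rightarrow> nat"
  assumes "finite A" and vanish: "\<And>t::real. t > 0 \<Longrightarrow> (\<Sum>a\<in>A. c a * complex_of_real t ^ g a) = 0"
  shows "(\<Sum>a\<in>{a\<in>A. g a = j}. c a) = 0"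
proof -
  define p where "p = (\<Sum>a\<in>A. monom (c a) (g a))"
  have "complex_of_real ` {0<..} \<subseteq> {z. poly p z = 0}"
    using vanish by (auto simp: p_def poly_sum poly_monom)
  moreover have "infinite (complex_of_real ` {0::real<..})"
    using finite_imageD[OF _ inj_on_subset[OF inj_of_real]] infinite_Ioi by blast
  ultimately have "p = 0"
    using poly_roots_finite finite_subset by blast
  then have "coeff p j = 0" by simp
  then show ?thesis
    using \<open>finite A\<close> by (simp add: p_def coeff_sum coeff_monom sum.inter_filter[symmetric] when_def)
qed

lemma coefficient_sums_vanish2:
  fixes c :: "'a \<Rightarrow> complex" and g h :: "'a \<Rightarrow> nat"
  assumes "finite A"
    and vanish: "\<And>s t::real. s > 0 \<Longrightarrow> t > 0 \<Longrightarrow>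
       (\<Sum>a\<in>A. c a * complex_of_real s ^ g a * complex_of_real t ^ h a) = 0"
  shows "(\<Sum>a\<in>{a\<in>A. g a = i \<and> h a = j}. c a) = 0"
proof -
  have "(\<Sum>a\<in>{a\<in>A. g a = i}. c a * complex_of_real t ^ h a) = 0" if "t > 0" for t
    using \<open>finite A\<close> by (rule coefficient_sums_vanish) (use vanish that in \<open>simp add: mult_ac\<close>)
  then have "(\<Sum>a\<in>{a\<in>{a\<in>A. g a = i}. h a = j}. c a) = 0"
    using \<open>finite A\<close> by (intro coefficient_sums_vanish[where c = c and g = h]) auto
  moreover have "{a\<in>{a\<in>A. g a = i}. h a = j} = {a\<in>A. g a = i \<and> h a = j}" by auto
  ultimately show ?thesis by simp
qed

lemma keys_nonempty: "C \<noteq> 0 \<Longrightarrow> Poly_Mapping.keys C \<noteq> {}"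
  by (metis empty_iff lookup_zero not_in_keys_iff_lookup_eq_zero poly_mapping_eqI)

lemma rep_entry_monomial_comb:
  "rep_entry v w (monomial_comb Z1 Z2 Z3 Z4 C) y x
    = (\<Sum>e\<in>Poly_Mapping.keys C. Poly_Mapping.lookup C e * rep_entry v w (ordered_monomial Z1 Z2 Z3 Z4 e) y x)"
  by (simp add: monomial_comb_eq rep_entry_sum rep_entry_scalar)

lemma monomial_weight_scaled:
  "monomial_weight (\<lambda>x. c * t1 x) (\<lambda>x. c * t2 x) (\<lambda>x. c * t3 x) (\<lambda>x. c * t4 x) u1 u2 u3 u4 (a1, a2, a3, a4) x
    = c ^ (a1 + a2 + a3 + a4) * monomial_weight t1 t2 t3 t4 u1 u2 u3 u4 (a1, a2, a3, a4) x"
  by (simp add: monomial_weight_def power_weight_def prod.distrib power_add mult_ac)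

definition total_degree :: "nat \<times> nat \<times> nat \<times> nat \<Rightarrow> nat" where
  "total_degree = (\<lambda>(a, b, c, d). a + b + c + d)"

definition last_exponent :: "nat \<times> nat \<times> nat \<times> nat \<Rightarrow> nat" where
  "last_exponent = (\<lambda>(a, b, c, d). d)"

text \<open>The representations used for \<open>q \<noteq> 1\<close> live on the half plane \<open>n \<ge> 0\<close>, where the lowering
  operator \<open>Z\<^sub>4\<close> annihilates the boundary \<open>n = 0\<close>; the scale \<open>m\<close> of \<open>\<delta>\<close> separates monomials
  of different total degree.\<close>

locale boundary_shift_family =
  fixes v :: "gen \<Rightarrow> site" and w :: "real \<Rightarrow> gen \<Rightarrow> site \<Rightarrow> complex"
    and Z1 Z2 Z3 Z4 :: falg and t1 t2 t3 t4 :: "site \<Rightarrow> complex" and r :: int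
  assumes Z1: "\<And>m. m > 0 \<Longrightarrow> weighted_shift v (w m) Z1 (1, 0) (\<lambda>x. complex_of_real m * t1 x)"
    and Z2: "\<And>m. m > 0 \<Longrightarrow> weighted_shift v (w m) Z2 (0, r) (\<lambda>x. complex_of_real m * t2 x)"
    and Z3: "\<And>m. m > 0 \<Longrightarrow> weighted_shift v (w m) Z3 (0, - r) (\<lambda>x. complex_of_real m * t3 x)"
    and Z4: "\<And>m. m > 0 \<Longrightarrow> weighted_shift v (w m) Z4 (- 1, 0) (\<lambda>x. complex_of_real m * t4 x)"
    and r_nonzero: "r \<noteq> 0"
    and t1: "\<And>n k. n \<ge> 0 \<Longrightarrow> t1 (n, k) \<noteq> 0" and t2: "\<And>n k. n \<ge> 0 \<Longrightarrow> t2 (n, k) \<noteq> 0"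
    and t3: "\<And>n k. n \<ge> 0 \<Longrightarrow> t3 (n, k) \<noteq> 0" and t4: "\<And>n k. n \<ge> 1 \<Longrightarrow> t4 (n, k) \<noteq> 0"
    and boundary: "\<And>k. t4 (0, k) = 0"
begin

abbreviation "mshift \<equiv> monomial_shift (1, 0) (0, r) (0, - r) (- 1, 0)"
abbreviation "mweight \<equiv> monomial_weight t1 t2 t3 t4 (1, 0) (0, r) (0, - r) (- 1, 0)"

lemma rep_entry_monomial:
  assumes "m > 0"
  shows "rep_entry v (w m) (ordered_monomial Z1 Z2 Z3 Z4 e) y x
    = (if y = x + mshift e then complex_of_real m ^ total_degree e * mweight e x else 0)"
  using weighted_shift_rep_entry[OF weighted_shift_ordered_monomial[OF Z1 Z2 Z3 Z4], OF assms assms assms assms]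
  by (cases e) (simp add: total_degree_def monomial_weight_scaled)

lemma exponents_determined:
  assumes "mshift e = mshift e'" "total_degree e = total_degree e'" "last_exponent e = last_exponent e'"
  shows "e = e'"
proof -
  have cancel: "b = b' \<and> c = c'"
    if "int b * r - int c * r = int b' * r - int c' * r" "b + c = b' + c'" for b c b' c' :: nat
  proof -
    have "(int b - int c) * r = (int b' - int c') * r"
      using that(1) by (simp add: algebra_simps)
    then have "int b - int c = int b' - int c'"
      using r_nonzero by simp
    with that(2) show ?thesis by linarith
  qed
  show ?thesis
    using assms cancel
    by (cases e; cases e') (auto simp: total_degree_def last_exponent_def monomial_shift_def site_scale_def)
qed

lemma mweight_eq_0_iff:
  assumes "n \<ge> 0"
  shows "mweight e (n, k) = 0 \<longleftrightarrow> n < int (last_exponent e)"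
proof -
  obtain a b c d where e: "e = (a, b, c, d)" by (cases e) auto
  show ?thesis
  proof
    assume "n < int (last_exponent e)"
    then have "\<exists>j\<in>{..<d}. t4 ((n, k) + site_scale j (- 1, 0)) = 0"
      using \<open>n \<ge> 0\<close> boundary by (intro bexI[of _ "nat n"]) (auto simp: e last_exponent_def site_scale_def)
    then show "mweight e (n, k) = 0"
      by (simp add: e monomial_weight_def power_weight_def)
  next
    assume "mweight e (n, k) = 0"
    then show "n < int (last_exponent e)"
    proof (rule contrapos_pp)
      assume "\<not> n < int (last_exponent e)"
      then show "mweight e (n, k) \<noteq> 0"
        by (auto simp: e last_exponent_def monomial_weight_def power_weight_def site_scale_def
            intro!: t1 t2 t3 t4)
    qed
  qed
qed

lemma homogeneous_parts_vanish:
  assumes vanish: "\<And>m. m > 0 \<Longrightarrow> rep_entry v (w m) (monomial_comb Z1 Z2 Z3 Z4 C) (x + s) x = 0"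
  shows "(\<Sum>e\<in>{e\<in>Poly_Mapping.keys C. mshift e = s \<and> total_degree e = j}.
    Poly_Mapping.lookup C e * mweight e x) = 0"
proof -
  have "(\<Sum>e\<in>Poly_Mapping.keys C. (if mshift e = s then Poly_Mapping.lookup C e * mweight e x else 0)
      * complex_of_real m ^ total_degree e) = 0" if "m > 0" for m
  proof -
    have "(\<Sum>e\<in>Poly_Mapping.keys C. (if mshift e = s then Poly_Mapping.lookup C e * mweight e x else 0)
        * complex_of_real m ^ total_degree e) = rep_entry v (w m) (monomial_comb Z1 Z2 Z3 Z4 C) (x + s) x"
      by (auto simp: rep_entry_monomial_comb rep_entry_monomial[OF that] intro!: sum.cong)
    with vanish[OF that] show ?thesis by simp
  qed
  then have "(\<Sum>e\<in>{e\<in>Poly_Mapping.keys C. total_degree e = j}.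
      if mshift e = s then Poly_Mapping.lookup C e * mweight e x else 0) = 0"
    by (intro coefficient_sums_vanish) auto
  then show ?thesis
    by (simp add: sum.inter_filter[symmetric] conj_ac)
qed

text \<open>Among the monomials of one shift and one total degree, the one of smallest \<open>Z\<^sub>4\<close>-degree \<open>d\<^sub>0\<close>
  is the only one acting nontrivially on the site \<open>(d\<^sub>0, 0)\<close>.\<close>

theorem ordered_monomials_independent:
  assumes vanish: "\<And>m n k y. m > 0 \<Longrightarrow> n \<ge> 0 \<Longrightarrow> rep_entry v (w m) (monomial_comb Z1 Z2 Z3 Z4 C) y (n, k) = 0"
  shows "C = 0"
proof (rule ccontr)
  assume "C \<noteq> 0"
  then obtain e1 where e1: "e1 \<in> Poly_Mapping.keys C"
    using keys_nonempty by blast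
  define F where "F = {e\<in>Poly_Mapping.keys C. mshift e = mshift e1 \<and> total_degree e = total_degree e1}"
  have "finite F" "e1 \<in> F" using e1 by (auto simp: F_def)
  then obtain e0 where e0: "e0 \<in> F" "last_exponent e0 = Min (last_exponent ` F)"
    by (metis (mono_tags, lifting) Min_in empty_iff finite_imageI imageE image_is_empty)
  define x where "x = (int (last_exponent e0), 0 :: int)"
  have "mweight e x = 0" if "e \<in> F - {e0}" for e
  proof -
    have "last_exponent e0 \<le> last_exponent e" using e0 that \<open>finite F\<close> by simp
    moreover have "last_exponent e \<noteq> last_exponent e0"
      using exponents_determined[of e e0] that e0(1) unfolding F_def by auto
    ultimately show ?thesis by (simp add: x_def mweight_eq_0_iff)
  qed
  then have "(\<Sum>e\<in>F. Poly_Mapping.lookup C e * mweight e x) = Poly_Mapping.lookup C e0 * mweight e0 x"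
    using \<open>finite F\<close> e0(1) by (simp add: sum.remove)
  moreover have "(\<Sum>e\<in>F. Poly_Mapping.lookup C e * mweight e x) = 0"
    unfolding F_def by (rule homogeneous_parts_vanish) (simp add: vanish x_def)
  moreover have "mweight e0 x \<noteq> 0" "Poly_Mapping.lookup C e0 \<noteq> 0"
    using e0(1) by (simp_all add: x_def mweight_eq_0_iff F_def in_keys_iff)
  ultimately show False by simp
qed

end

text \<open>For \<open>q = 1\<close> there is no boundary; instead two scales \<open>s, t\<close> separate the degrees in
  \<open>Z\<^sub>1, Z\<^sub>4\<close> and in \<open>Z\<^sub>2, Z\<^sub>3\<close>.\<close>

theorem ordered_monomials_independent_unbounded:
  fixes v :: "gen \<Rightarrow> site" and w :: "real \<Rightarrow> real \<Rightarrow> gen \<Rightarrow> site \<Rightarrow> complex"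
  assumes Z1: "\<And>s t. s > 0 \<Longrightarrow> t > 0 \<Longrightarrow> weighted_shift v (w s t) Z1 (1, 0) (\<lambda>x. complex_of_real s)"
    and Z2: "\<And>s t. s > 0 \<Longrightarrow> t > 0 \<Longrightarrow> weighted_shift v (w s t) Z2 (0, 1) (\<lambda>x. complex_of_real t)"
    and Z3: "\<And>s t. s > 0 \<Longrightarrow> t > 0 \<Longrightarrow> weighted_shift v (w s t) Z3 (0, - 1) (\<lambda>x. - complex_of_real t)"
    and Z4: "\<And>s t. s > 0 \<Longrightarrow> t > 0 \<Longrightarrow> weighted_shift v (w s t) Z4 (- 1, 0) (\<lambda>x. complex_of_real s)"
    and vanish: "\<And>s t y. s > 0 \<Longrightarrow> t > 0 \<Longrightarrow> rep_entry v (w s t) (monomial_comb Z1 Z2 Z3 Z4 C) y 0 = 0"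
  shows "C = 0"
proof (rule ccontr)
  define sh where "sh = monomial_shift (1, 0) (0, 1) (0, - 1) (- 1, 0)"
  define g :: "nat \<times> nat \<times> nat \<times> nat \<Rightarrow> nat" where "g = (\<lambda>(a, b, c, d). a + d)"
  define h :: "nat \<times> nat \<times> nat \<times> nat \<Rightarrow> nat" where "h = (\<lambda>(a, b, c, d). b + c)"
  define sign :: "nat \<times> nat \<times> nat \<times> nat \<Rightarrow> complex" where "sign = (\<lambda>(a, b, c, d). (- 1) ^ c)"
  have entry: "rep_entry v (w s t) (ordered_monomial Z1 Z2 Z3 Z4 e) y 0
      = (if y = sh e then sign e * complex_of_real s ^ g e * complex_of_real t ^ h e else 0)"
    if "s > 0" "t > 0" for s t e y
    using weighted_shift_rep_entry[OF weighted_shift_ordered_monomial[OF Z1 Z2 Z3 Z4], OF that that that that]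
    by (cases e) (simp add: sh_def g_def h_def sign_def monomial_weight_def power_weight_def
        power_add power_minus[of "complex_of_real t"] mult_ac)
  assume "C \<noteq> 0"
  then obtain e0 where e0: "e0 \<in> Poly_Mapping.keys C"
    using keys_nonempty by blast
  have "(\<Sum>e\<in>Poly_Mapping.keys C. (if sh e = sh e0 then Poly_Mapping.lookup C e * sign e else 0)
      * complex_of_real s ^ g e * complex_of_real t ^ h e) = 0" if "s > 0" "t > 0" for s t
  proof -
    have "(\<Sum>e\<in>Poly_Mapping.keys C. (if sh e = sh e0 then Poly_Mapping.lookup C e * sign e else 0)
        * complex_of_real s ^ g e * complex_of_real t ^ h e)
        = rep_entry v (w s t) (monomial_comb Z1 Z2 Z3 Z4 C) (sh e0) 0"
      by (auto simp: rep_entry_monomial_comb entry[OF that] intro!: sum.cong)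
    with vanish[OF that] show ?thesis by simp
  qed
  then have "(\<Sum>e\<in>{e\<in>Poly_Mapping.keys C. g e = g e0 \<and> h e = h e0}.
      if sh e = sh e0 then Poly_Mapping.lookup C e * sign e else 0) = 0"
    by (intro coefficient_sums_vanish2) auto
  moreover have "{e\<in>Poly_Mapping.keys C. g e = g e0 \<and> h e = h e0} \<inter> {e. sh e = sh e0} = {e0}"
    using e0 by (cases e0) (auto simp: sh_def g_def h_def monomial_shift_def site_scale_def)
  ultimately have "Poly_Mapping.lookup C e0 * sign e0 = 0"
    by (simp add: sum.If_cases)
  then show False
    using e0 by (cases e0) (simp add: sign_def in_keys_iff)
qed

definition gen_shift :: "site \<Rightarrow> site \<Rightarrow> gen \<Rightarrow> site" where
  "gen_shift a b g = (case g of G11 \<Rightarrow> a | G22 \<Rightarrow> - a | G12 \<Rightarrow> b | G21 \<Rightarrow> - b | _ \<Rightarrow> 0)"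

text \<open>The defining relations of \<open>SL(2)\<^sub>q\<close>-tilde for the weighted shifts along \<open>gen_shift a b\<close>,
  evaluated at the site \<open>x\<close>; the commutation relations of \<open>\<delta>\<close> with the \<open>g\<^sub>i\<^sub>j\<close> are imposed on the
  weight of \<open>\<delta>\<close> alone.\<close>

definition shift_relations :: "real \<Rightarrow> site \<Rightarrow> site \<Rightarrow> (gen \<Rightarrow> site \<Rightarrow> 'a::real_field) \<Rightarrow> site \<Rightarrow> bool" where
  "shift_relations q a b w x \<longleftrightarrow>
     w G11 (x + b) * w G12 x = of_real (1 / q) * (w G12 (x + a) * w G11 x) \<and>
     w G11 (x - b) * w G21 x = of_real (1 / q) * (w G21 (x + a) * w G11 x) \<and>
     w G12 (x - a) * w G22 x = of_real (1 / q) * (w G22 (x + b) * w G12 x) \<and>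
     w G21 (x - a) * w G22 x = of_real (1 / q) * (w G22 (x - b) * w G21 x) \<and>
     w G12 (x - b) * w G21 x = w G21 (x + b) * w G12 x \<and>
     w G11 (x - a) * w G22 x = 1 + of_real (1 / q) * (w G21 (x + b) * w G12 x) \<and>
     w G22 (x + a) * w G11 x = 1 + of_real q * (w G21 (x + b) * w G12 x) \<and>
     w Dl x * w DlInv x = 1 \<and>
     w Dl (x + a) = w Dl x \<and> w Dl (x - a) = w Dl x \<and>
     w Dl (x + b) = of_real q * w Dl x \<and> w Dl (x - b) = of_real (1 / q) * w Dl x"

lemma shift_relations_of_real:
  "shift_relations q a b (\<lambda>g x. complex_of_real (wr g x)) x \<longleftrightarrow> shift_relations q a b wr x"
proof -
  have "complex_of_real c = 1 + complex_of_real d \<longleftrightarrow> c = 1 + d" for c d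
    by (metis of_real_1 of_real_add of_real_eq_iff)
  then show ?thesis
    unfolding shift_relations_def
    by (simp only: of_real_mult[symmetric] of_real_eq_iff of_real_eq_1_iff of_real_eq_id id_apply)
qed

lemma rep_entry_sl_rels:
  assumes rels: "shift_relations q a b w x" and "r \<in> sl_rels q"
  shows "rep_entry (gen_shift a b) w r y x = 0"
proof -
  have one: "rep_entry v w (scalar c) y x = (if y = x then c else 0)" for v c y x
    using rep_entry_scalar[of v w c 1 y x] by (simp add: rep_entry_one)
  have "w DlInv x * w Dl x = 1"
    using rels by (simp add: shift_relations_def mult.commute)
  with \<open>r \<in> sl_rels q\<close> rels show ?thesis
    unfolding sl_rels_def Let_def shift_relations_def
    by (elim insertE emptyE conjE; simp (no_asm_simp) add: rep_entry_diff rep_entry_mult_gen one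
        rep_entry_gen rep_entry_one rep_entry_scalar gen_shift_def)
qed

lemma star_rep_of_real_weights:
  fixes wr :: "gen \<Rightarrow> site \<Rightarrow> real"
  assumes dagger: "\<And>x. wr G22 x = wr G11 (x - a)" "\<And>x. wr G21 x = - wr G12 (x - b)"
    and invariant: "\<And>g x. x \<in> G \<Longrightarrow> wr g x \<noteq> 0 \<Longrightarrow> x + gen_shift a b g \<in> G"
    and relations: "\<And>x. x \<in> G \<Longrightarrow> shift_relations q a b wr x"
  shows "star_rep q (gen_shift a b) (\<lambda>g x. complex_of_real (wr g x)) G"
  unfolding star_rep_def
proof (intro conjI allI ballI impI)
  fix g y x
  show "rep_entry (gen_shift a b) (\<lambda>g x. complex_of_real (wr g x)) (dag_gen g) y x
      = cnj (rep_entry (gen_shift a b) (\<lambda>g x. complex_of_real (wr g x)) (gen_el g) x y)"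
    by (cases g) (auto simp: rep_entry_gen rep_entry_uminus gen_shift_def dagger)
next
  fix r x y
  assume "r \<in> sl_rels q" "x \<in> G"
  then show "rep_entry (gen_shift a b) (\<lambda>g x. complex_of_real (wr g x)) r y x = 0"
    by (intro rep_entry_sl_rels) (simp_all add: shift_relations_of_real relations)
qed (use invariant in simp)

definition gen_swap :: "gen \<Rightarrow> gen" where
  "gen_swap g = (case g of G11 \<Rightarrow> G22 | G22 \<Rightarrow> G11 | G12 \<Rightarrow> G21 | G21 \<Rightarrow> G12 | _ \<Rightarrow> g)"

text \<open>Exchanging \<open>g\<^sub>1\<^sub>1 \<leftrightarrow> g\<^sub>2\<^sub>2\<close> and \<open>g\<^sub>1\<^sub>2 \<leftrightarrow> g\<^sub>2\<^sub>1\<close> turns the relations for \<open>q\<close> into those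
  for \<open>1 / q\<close>.\<close>

lemma shift_relations_swap:
  fixes w :: "gen \<Rightarrow> site \<Rightarrow> real"
  assumes "p > 0" and "shift_relations p a b w x"
  shows "shift_relations (1 / p) (- a) (- b) (\<lambda>g. w (gen_swap g)) x"
  using assms unfolding shift_relations_def gen_swap_def
  by (simp add: field_simps)

section \<open>The half-plane representations\<close>

definition beta_weight :: "real \<Rightarrow> int \<Rightarrow> real" where
  "beta_weight p n = p powr (real_of_int n + 1 / 2)"

definition alpha_weight :: "real \<Rightarrow> int \<Rightarrow> real" where
  "alpha_weight p n = sqrt (1 - p powr (2 * real_of_int n + 2))"

definition half_plane_weight :: "real \<Rightarrow> real \<Rightarrow> gen \<Rightarrow> site \<Rightarrow> real" where
  "half_plane_weight p m g x = (case x of (n, k) \<Rightarrow> (case g of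
     G11 \<Rightarrow> alpha_weight p n | G22 \<Rightarrow> alpha_weight p (n - 1)
   | G12 \<Rightarrow> beta_weight p n | G21 \<Rightarrow> - beta_weight p n
   | Dl \<Rightarrow> m * p powr real_of_int k | DlInv \<Rightarrow> 1 / (m * p powr real_of_int k)))"

definition half_plane :: "site set" where
  "half_plane = {x. fst x \<ge> 0}"

context
  fixes p :: real
  assumes p: "0 < p" "p < 1"
begin

lemma powr_plus_one: "p powr (t + 1) = p * p powr t"
  using p by (simp add: powr_add)

lemma beta_weight_pos: "beta_weight p n > 0"
  using p by (simp add: beta_weight_def)

lemma beta_weight_succ: "beta_weight p (n + 1) = p * beta_weight p n"
  using powr_plus_one[of "real_of_int n + 1 / 2"] by (simp add: beta_weight_def add_ac)

lemma beta_weight_sq: "beta_weight p n * beta_weight p n = p powr (2 * real_of_int n + 1)"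
  using p by (simp add: beta_weight_def powr_add[symmetric] algebra_simps)

lemma alpha_weight_sq: "n \<ge> -1 \<Longrightarrow> alpha_weight p n * alpha_weight p n = 1 - p powr (2 * real_of_int n + 2)"
  using p by (simp add: alpha_weight_def powr_le1)

lemma alpha_weight_pos: "n \<ge> 0 \<Longrightarrow> alpha_weight p n > 0"
  using p powr_less_mono2[of "2 * real_of_int n + 2" p 1] by (simp add: alpha_weight_def)

lemma alpha_weight_boundary: "alpha_weight p (- 1) = 0"
  using p by (simp add: alpha_weight_def)

lemma half_plane_shift_relations:
  assumes "m > 0" and "n \<ge> 0"
  shows "shift_relations p (1, 0) (0, 1) (half_plane_weight p m) (n, k)"
proof -
  have "p powr (real_of_int k + 1) = p * p powr real_of_int k"
    "p powr (real_of_int k - 1) = p powr real_of_int k / p"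
    using p by (simp_all add: powr_add powr_diff)
  moreover have "p powr (2 * real_of_int n + 1) = p * p powr (2 * real_of_int (n - 1) + 2)"
    "p * p powr (2 * real_of_int n + 1) = p powr (2 * real_of_int n + 2)"
    using powr_plus_one[of "2 * real_of_int n"] powr_plus_one[of "2 * real_of_int n + 1"]
    by (simp_all add: algebra_simps)
  ultimately show ?thesis
    using p assms beta_weight_succ[of n] beta_weight_succ[of "n - 1"] beta_weight_sq[of n] alpha_weight_sq[of n] alpha_weight_sq[of "n - 1"]
    by (simp add: shift_relations_def half_plane_weight_def field_simps)
qed

lemma half_plane_star_rep:
  assumes "m > 0"
  shows "star_rep p (gen_shift (1, 0) (0, 1)) (\<lambda>g x. complex_of_real (half_plane_weight p m g x)) half_plane"
proof (rule star_rep_of_real_weights)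
  fix g and x :: site
  assume "x \<in> half_plane" "half_plane_weight p m g x \<noteq> 0"
  then show "x + gen_shift (1, 0) (0, 1) g \<in> half_plane"
    using alpha_weight_boundary
    by (cases x; cases g) (auto simp: half_plane_def half_plane_weight_def gen_shift_def le_less)
next
  fix x :: site
  assume "x \<in> half_plane"
  then show "shift_relations p (1, 0) (0, 1) (half_plane_weight p m) x"
    using half_plane_shift_relations[OF \<open>m > 0\<close>] by (cases x) (simp add: half_plane_def)
qed (auto simp: half_plane_weight_def split: prod.splits)

lemma half_plane_star_rep_swapped:
  assumes "m > 0"
  shows "star_rep (1 / p) (gen_shift (- 1, 0) (0, - 1))
    (\<lambda>g x. complex_of_real (half_plane_weight p m (gen_swap g) x)) half_plane"
proof (rule star_rep_of_real_weights)
  fix g and x :: site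
  assume "x \<in> half_plane" "half_plane_weight p m (gen_swap g) x \<noteq> 0"
  then show "x + gen_shift (- 1, 0) (0, - 1) g \<in> half_plane"
    using alpha_weight_boundary
    by (cases x; cases g) (auto simp: half_plane_def half_plane_weight_def gen_shift_def gen_swap_def le_less)
next
  fix x :: site
  assume "x \<in> half_plane"
  then show "shift_relations (1 / p) (- 1, 0) (0, - 1) (\<lambda>g. half_plane_weight p m (gen_swap g)) x"
    using shift_relations_swap[OF _ half_plane_shift_relations[OF \<open>m > 0\<close>]] p
    by (cases x) (simp add: half_plane_def)
qed (auto simp: half_plane_weight_def gen_swap_def split: prod.splits)

lemma half_plane_boundary_family:
  fixes w :: "real \<Rightarrow> gen \<Rightarrow> site \<Rightarrow> complex" and c2 c3 :: complex
  defines "t1 \<equiv> \<lambda>(n, k). complex_of_real (p powr real_of_int k * alpha_weight p n)"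
    and "t2 \<equiv> \<lambda>(n, k). c2 * complex_of_real (p powr (real_of_int k + 1) * beta_weight p n)"
    and "t3 \<equiv> \<lambda>(n, k). c3 * complex_of_real (p powr (real_of_int k - 1) * - beta_weight p n)"
    and "t4 \<equiv> \<lambda>(n, k). complex_of_real (p powr real_of_int k * alpha_weight p (n - 1))"
  assumes c: "c2 \<noteq> 0" "c3 \<noteq> 0"
    and Z: "\<And>m. m > 0 \<Longrightarrow> weighted_shift v (w m) Z1 (1, 0) (\<lambda>x. complex_of_real m * t1 x)"
      "\<And>m. m > 0 \<Longrightarrow> weighted_shift v (w m) Z2 (0, 1) (\<lambda>x. complex_of_real m * t2 x)"
      "\<And>m. m > 0 \<Longrightarrow> weighted_shift v (w m) Z3 (0, - 1) (\<lambda>x. complex_of_real m * t3 x)"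
      "\<And>m. m > 0 \<Longrightarrow> weighted_shift v (w m) Z4 (- 1, 0) (\<lambda>x. complex_of_real m * t4 x)"
  shows "boundary_shift_family v w Z1 Z2 Z3 Z4 t1 t2 t3 t4 1"
  using c Z p alpha_weight_pos alpha_weight_boundary beta_weight_pos
  by unfold_locales (auto simp: t1_def t2_def t3_def t4_def less_imp_neq[symmetric])

end

definition star_annihilated :: "real \<Rightarrow> falg \<Rightarrow> bool" where
  "star_annihilated q f \<longleftrightarrow> (\<forall>v w G. star_rep q v w G \<longrightarrow> (\<forall>x\<in>G. \<forall>y. rep_entry v w f y x = 0))"

lemma star_annihilated_sum_dagger:
  assumes "finite A" and "i \<in> A" and "(\<Sum>j\<in>A. dagger (f j) * f j) \<in> sl_ideal q"
  shows "star_annihilated q (f i)"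
  using star_rep_sum_dagger[OF _ assms(1,2) _ assms(3)] by (auto simp: star_annihilated_def)

lemma star_annihilated_monomial_comb:
  assumes "star_annihilated q t" and "sl_cong q t (monomial_comb Z1 Z2 Z3 Z4 C)"
    and "star_rep q v w G" and "x \<in> G"
  shows "rep_entry v w (monomial_comb Z1 Z2 Z3 Z4 C) y x = 0"
proof -
  have "rep_entry v w (t - monomial_comb Z1 Z2 Z3 Z4 C) y x = 0"
    using assms(2-4) by (intro star_rep_ideal) (simp_all add: sl_cong_def)
  moreover have "rep_entry v w t y x = 0"
    using assms(1,3,4) unfolding star_annihilated_def by blast
  ultimately show ?thesis
    by (simp add: rep_entry_diff)
qed

lemma star_annihilated_minkowski_lt1:
  assumes "0 < q" "q < 1" and t: "t \<in> minkowski q" "star_annihilated q t"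
  shows "t \<in> sl_ideal q"
proof -
  obtain C where C: "sl_cong q t (monomial_comb (x11 q) (x12 q) (x21 q) (x22 q) C)"
    using minkowski_in_ordered_span[OF ordering_relations_x[OF assms(1)] _ t(1)]
    unfolding ordered_span_def by auto
  define w where "w = (\<lambda>m g x. complex_of_real (half_plane_weight q m g x))"
  let ?v = "gen_shift (1, 0) (0, 1)"
  have "weighted_shift ?v (w m) (scalar c * dl * gen_el g) (?v g)
      (\<lambda>x. c * complex_of_real (half_plane_weight q m Dl (x + ?v g) * half_plane_weight q m g x))" for m c g
    by (rule weighted_shift_cong[OF weighted_shift_delta_gen]) (simp_all add: w_def gen_shift_def)
  note delta_gen = this[THEN weighted_shift_cong]
  interpret boundary_shift_family ?v w "x11 q" "x12 q" "x21 q" "x22 q"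
    "\<lambda>(n, k). complex_of_real (q powr real_of_int k * alpha_weight q n)"
    "\<lambda>(n, k). complex_of_real (1 / sqrt q) * complex_of_real (q powr (real_of_int k + 1) * beta_weight q n)"
    "\<lambda>(n, k). complex_of_real (sqrt q) * complex_of_real (q powr (real_of_int k - 1) * - beta_weight q n)"
    "\<lambda>(n, k). complex_of_real (q powr real_of_int k * alpha_weight q (n - 1))" 1
    using assms(1,2) unfolding x11_x22_scaled x12_def x21_def
    by (intro half_plane_boundary_family delta_gen)
      (auto simp: gen_shift_def half_plane_weight_def powr_add powr_diff split: prod.splits)
  have "C = 0"
    using star_annihilated_monomial_comb[OF t(2) C half_plane_star_rep[OF assms(1,2)]]
    by (intro ordered_monomials_independent) (simp add: w_def half_plane_def)
  with C show ?thesis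
    by (simp add: sl_cong_zero_iff)
qed

lemma star_annihilated_minkowski_gt1:
  assumes "q > 1" and t: "t \<in> minkowski q" "star_annihilated q t"
  shows "t \<in> sl_ideal q"
proof -
  define p where "p = 1 / q"
  have p: "0 < p" "p < 1" "q = 1 / p"
    using assms(1) by (simp_all add: p_def)
  have "ordering_relations q (1 / complex_of_real (q\<^sup>2)) (x22 q) (x21 q) (x12 q) (x11 q)"
    using assms(1) by (intro ordering_relations_reverse ordering_relations_x) simp_all
  then obtain C where C: "sl_cong q t (monomial_comb (x22 q) (x21 q) (x12 q) (x11 q) C)"
    using minkowski_in_ordered_span[OF _ _ t(1)] unfolding ordered_span_def by blast
  define w where "w = (\<lambda>m g x. complex_of_real (half_plane_weight p m (gen_swap g) x))"
  let ?v = "gen_shift (- 1, 0) (0, - 1)"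
  have "weighted_shift ?v (w m) (scalar c * dl * gen_el g) (?v g)
      (\<lambda>x. c * complex_of_real (half_plane_weight p m Dl (x + ?v g) * half_plane_weight p m (gen_swap g) x))"
    for m c g
    by (rule weighted_shift_cong[OF weighted_shift_delta_gen]) (simp_all add: w_def gen_shift_def gen_swap_def)
  note delta_gen = this[THEN weighted_shift_cong]
  interpret boundary_shift_family ?v w "x22 q" "x21 q" "x12 q" "x11 q"
    "\<lambda>(n, k). complex_of_real (p powr real_of_int k * alpha_weight p n)"
    "\<lambda>(n, k). complex_of_real (sqrt q) * complex_of_real (p powr (real_of_int k + 1) * beta_weight p n)"
    "\<lambda>(n, k). complex_of_real (1 / sqrt q) * complex_of_real (p powr (real_of_int k - 1) * - beta_weight p n)"
    "\<lambda>(n, k). complex_of_real (p powr real_of_int k * alpha_weight p (n - 1))" 1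
    using p assms(1) unfolding x11_x22_scaled x12_def x21_def
    by (intro half_plane_boundary_family delta_gen)
      (auto simp: gen_shift_def gen_swap_def half_plane_weight_def powr_add powr_diff mult_ac split: prod.splits)
  have "C = 0"
    using star_annihilated_monomial_comb[OF t(2) C, of ?v "w _" half_plane] half_plane_star_rep_swapped[OF p(1,2)]
    by (intro ordered_monomials_independent) (simp add: w_def half_plane_def p(3))
  with C show ?thesis
    by (simp add: sl_cong_zero_iff)
qed

definition rotation_weight :: "real \<Rightarrow> real \<Rightarrow> gen \<Rightarrow> site \<Rightarrow> real" where
  "rotation_weight s t g x = (let r = sqrt (s\<^sup>2 + t\<^sup>2) in
     case g of G11 \<Rightarrow> s / r | G22 \<Rightarrow> s / r | G12 \<Rightarrow> t / r | G21 \<Rightarrow> - t / r | Dl \<Rightarrow> r | DlInv \<Rightarrow> 1 / r)"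

lemma rotation_star_rep:
  assumes "s > 0" "t > 0"
  shows "star_rep 1 (gen_shift (1, 0) (0, 1)) (\<lambda>g x. complex_of_real (rotation_weight s t g x)) UNIV"
proof (rule star_rep_of_real_weights)
  fix x :: site
  define r where "r = sqrt (s\<^sup>2 + t\<^sup>2)"
  have "r > 0" "r * r = s * s + t * t" "s * s + t * t \<noteq> 0"
    using assms by (simp_all add: r_def add_pos_pos flip: power2_eq_square)
  then show "shift_relations 1 (1, 0) (0, 1) (rotation_weight s t) x"
    by (simp add: shift_relations_def rotation_weight_def Let_def flip: r_def) (simp add: field_simps)
qed (simp_all add: rotation_weight_def)

lemma star_annihilated_minkowski_1:
  assumes f: "f \<in> minkowski 1" "star_annihilated 1 f"
  shows "f \<in> sl_ideal 1"
proof -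
  obtain C where C: "sl_cong 1 f (monomial_comb (x11 1) (x12 1) (x21 1) (x22 1) C)"
    using minkowski_in_ordered_span[OF ordering_relations_x _ f(1)] unfolding ordered_span_def by auto
  define w where "w = (\<lambda>s t g x. complex_of_real (rotation_weight s t g x))"
  let ?v = "gen_shift (1, 0) (0, 1)"
  have "weighted_shift ?v (w s t) (scalar c * dl * gen_el g) (?v g)
      (\<lambda>x. c * complex_of_real (rotation_weight s t Dl (x + ?v g) * rotation_weight s t g x))" for s t c g
    by (rule weighted_shift_cong[OF weighted_shift_delta_gen]) (simp_all add: w_def gen_shift_def)
  note delta_gen = this[THEN weighted_shift_cong]
  have "C = 0"
  proof (rule ordered_monomials_independent_unbounded[where v = ?v and w = w])
    fix s t :: real
    assume "s > 0" "t > 0"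
    then have r: "sqrt (s\<^sup>2 + t\<^sup>2) \<noteq> 0"
      by simp
    show "weighted_shift ?v (w s t) (x11 1) (1, 0) (\<lambda>x. complex_of_real s)"
      "weighted_shift ?v (w s t) (x12 1) (0, 1) (\<lambda>x. complex_of_real t)"
      "weighted_shift ?v (w s t) (x21 1) (0, - 1) (\<lambda>x. - complex_of_real t)"
      "weighted_shift ?v (w s t) (x22 1) (- 1, 0) (\<lambda>x. complex_of_real s)"
      unfolding x11_x22_scaled x12_def x21_def using r
      by (intro delta_gen; simp add: gen_shift_def rotation_weight_def Let_def)+
    show "rep_entry ?v (w s t) (monomial_comb (x11 1) (x12 1) (x21 1) (x22 1) C) y 0 = 0" for y
      using star_annihilated_monomial_comb[OF f(2) C rotation_star_rep[OF \<open>s > 0\<close> \<open>t > 0\<close>]]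
      by (simp add: w_def)
  qed
  with C show ?thesis
    by (simp add: sl_cong_zero_iff)
qed

theorem star_annihilated_minkowski_in_ideal:
  assumes "q > 0" and "f \<in> minkowski q" and "star_annihilated q f"
  shows "f \<in> sl_ideal q"
proof -
  consider "q < 1" | "q = 1" | "q > 1" by linarith
  then show ?thesis
    using assms star_annihilated_minkowski_lt1 star_annihilated_minkowski_1 star_annihilated_minkowski_gt1
    by cases blast+
qed

lemma tpair_eq_sum_components:
  "tpair n m v f = (\<Sum>i<n. dagger (tcomp m v f i) * tcomp m v f i)"
proof -
  have scalars: "scalar a * X * (scalar b * Y) = scalar (a * b) * (X * Y)" for a b X Y
    by (simp only: mult.assoc mult_scalar_left_commute[of X] scalar_mult_scalar_assoc)
  have "(\<Sum>i<n. dagger (tcomp m v f i) * tcomp m v f i)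
      = (\<Sum>i<n. \<Sum>l<m. \<Sum>k<m. scalar (cnj (v k i)) * dagger (f k) * (scalar (v l i) * f l))"
    by (simp add: tcomp_def dagger_sum dagger_scalar sum_distrib_left sum_distrib_right)
  also have "\<dots> = (\<Sum>i<n. \<Sum>l<m. \<Sum>k<m. scalar (cnj (v k i) * v l i) * (dagger (f k) * f l))"
    by (simp only: scalars)
  also have "\<dots> = (\<Sum>k<m. \<Sum>l<m. \<Sum>i<n. scalar (cnj (v k i) * v l i) * (dagger (f k) * f l))"
    by (subst sum.swap, subst (2) sum.swap, subst sum.swap) (rule refl)
  also have "\<dots> = tpair n m v f"
    by (simp add: tpair_def herm_def scalar_sum sum_distrib_right)
  finally show ?thesis ..
qed

lemma minkowski_sum: "(\<And>i. i \<in> A \<Longrightarrow> f i \<in> minkowski q) \<Longrightarrow> (\<Sum>i\<in>A. f i) \<in> minkowski q"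
  by (induction A rule: infinite_finite_induct) (auto intro: minkowski.add minkowski.scal[of 0, simplified])

lemma tcomp_minkowski: "(\<And>k. k < m \<Longrightarrow> f k \<in> minkowski q) \<Longrightarrow> tcomp m v f i \<in> minkowski q"
  unfolding tcomp_def by (rule minkowski_sum) (auto intro: minkowski.mult minkowski.scal)

theorem proposition3p4:
  fixes q :: real and n m :: nat
    and v :: "nat \<Rightarrow> nat \<Rightarrow> complex" and f :: "nat \<Rightarrow> falg"
  assumes "q > 0"
    and "\<forall>k<m. f k \<in> minkowski q"
  shows "tpair n m v f \<in> sl_ideal q \<longleftrightarrow> (\<forall>i<n. tcomp m v f i \<in> sl_ideal q)"
proof
  assume "tpair n m v f \<in> sl_ideal q"
  then have sum: "(\<Sum>i\<in>{..<n}. dagger (tcomp m v f i) * tcomp m v f i) \<in> sl_ideal q"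
    by (simp add: tpair_eq_sum_components)
  show "\<forall>i<n. tcomp m v f i \<in> sl_ideal q"
  proof (intro allI impI)
    fix i
    assume "i < n"
    then have "star_annihilated q (tcomp m v f i)"
      by (intro star_annihilated_sum_dagger[OF finite_lessThan _ sum]) simp
    moreover have "tcomp m v f i \<in> minkowski q"
      using assms(2) by (simp add: tcomp_minkowski)
    ultimately show "tcomp m v f i \<in> sl_ideal q"
      using star_annihilated_minkowski_in_ideal[OF assms(1)] by blast
  qed
next
  assume "\<forall>i<n. tcomp m v f i \<in> sl_ideal q"
  then have "(\<Sum>i<n. dagger (tcomp m v f i) * tcomp m v f i) \<in> sl_ideal q"
    by (auto intro: sl_ideal_sum sl_ideal_mult_left)
  then show "tpair n m v f \<in> sl_ideal q"
    by (simp add: tpair_eq_sum_components)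
qed

end
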